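(* Let $p,q,r\in(0,\infty)$. For every $\omega$-measurable function $f$ on $X=\mathbb R\times(0,\infty)\times\mathbb R$, locally in $L^r(X,\omega)$ and supported in $X_J=(-2^JJ,2^JJ]\times(2^{-J},2^J]\times(-2^JJ,2^JJ]$ for some $J\in\mathbb N$, the function $F(f,r)$ on $X'=\mathbb Z^3$ defined by $F(f,r)(m,l,n)=\|f1_{H(m,l,n)}\|_{L^r(X,\omega)}$ satisfies $$\|f\|_{L^q_\nu(\ell^r_\omega)}=\|F(f,r)\|_{L^q_{\nu'}(\ell^r_{\omega'})},\qquad \|f\|_{L^p_\mu(\ell^q_\nu(\ell^r_\omega))}=\|F(f,r)\|_{L^p_{\mu'}(\ell^q_{\nu'}(\ell^r_{\omega'}))}.$$
   Context: Continuous setting: $\omega$ Lebesgue measure on $X$. Dyadic intervals $I(m,l)=(2^lm,2^l(m+1)]$; tiles $H(m,l,n)=I(m,l)\times(2^{l-1},2^l]\times I(n,-l)$. Strips $D(m,l)=I(m,l)\times(0,2^l]\times\mathbb R$ form $\mathcal D$, $\sigma(D(m,l))=2^l$. Trees $T(m,l,n)=\bigcup_{l'\le l}\bigcup_{m':\,I(m',l')\subseteq I(m,l)}H(m',l',N(n,l'))$, where $N(n,l')$ is the integer with $I(n,-l)\subseteq I(N(n,l'),-l')$, form $\mathcal T$, $\tau(T(m,l,n))=2^l$. $\mu(A)=\inf\{\sum_{S\in\mathcal S'}\sigma(S):\mathcal S'\subseteq\mathcal D,A\subseteq\bigcup\mathcal S'\}$, $\nu$ likewise from $(\mathcal T,\tau)$.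 Quasi-norms on $X$ (for measurable $f$): $\ell^r_\omega(f)(T)=\nu(T)^{-1/r}\|f1_T\|_{L^r(\omega)}$, $T\in\mathcal T$; $\|f\|_{L^\infty_\nu(\ell^r_\omega)}=\sup_{T\in\mathcal T}\ell^r_\omega(f)(T)$; $\nu(\ell^r_\omega(f)>\lambda)=\inf\{\nu(B):B\text{ measurable},\|f1_{X\setminus B}\|_{L^\infty_\nu(\ell^r_\omega)}\le\lambda\}$; $\|f\|_{L^q_\nu(\ell^r_\omega)}=(\int_0^\infty q\lambda^{q-1}\nu(\ell^r_\omega(f)>\lambda)d\lambda)^{1/q}$; $\ell^q_\nu(\ell^r_\omega)(f)(D)=\mu(D)^{-1/q}\|f1_D\|_{L^q_\nu(\ell^r_\omega)}$, $D\in\mathcal D$; $\|f\|_{L^\infty_\mu(\ell^q_\nu(\ell^r_\omega))}=\sup_{D\in\mathcal D}$; $\mu(\ell^q_\nu(\ell^r_\omega)(f)>\lambda)=\inf\{\mu(B):\|f1_{X\setminus B}\|_{L^\infty_\mu(\ell^q_\nu(\ell^r_\omega))}\le\lambda\}$; $\|f\|_{L^p_\mu(\ell^q_\nu(\ell^r_\omega))}=(\int_0^\infty p\lambda^{p-1}\mu(\cdots>\lambda)d\lambda)^{1/p}$. Discrete setting: $X'=\mathbb Z^3$, $\omega'$ the counting measure. $D'(m,l)=\{(m',l',n'):l'\le l,\ m'\in[2^{l-l'}m,2^{l-l'}(m+1)),\ n'\in\mathbb Z\}$ with $\sigma'(D'(m,l))=2^l$; $T'(m,l,n)=\{(m',l',n'):l'\le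 l,\ m'\in[2^{l-l'}m,2^{l-l'}(m+1)),\ n'=N(n,l')\}$ with $\tau'(T'(m,l,n))=2^l$; $\mu',\nu'$ are the covering outer measures $\mu'(A)=\inf\{\sum\sigma'(S):A\subseteq\bigcup S\}$, $\nu'(A)=\inf\{\sum\tau'(S):A\subseteq\bigcup S\}$ over subcollections of these sets. Quasi-norms on $X'$ are defined as on $X$ but with suprema over all nonempty subsets $A\subseteq X'$: $\ell^r_{\omega'}(F)(A)=\nu'(A)^{-1/r}\|F1_A\|_{L^r(X',\omega')}$, $\|F\|_{L^\infty_{\nu'}(\ell^r_{\omega'})}=\sup_{A\ne\varnothing}\ell^r_{\omega'}(F)(A)$, $\nu'(\ell^r_{\omega'}(F)>\lambda)=\inf\{\nu'(B):\|F1_{X'\setminus B}\|_{L^\infty_{\nu'}(\ell^r_{\omega'})}\le\lambda\}$, $L^q_{\nu'}(\ell^r_{\omega'})$ by the same integral formula, and analogously $\ell^q_{\nu'}(\ell^r_{\omega'})(F)(A)=\mu'(A)^{-1/q}\|F1_A\|_{L^q_{\nu'}(\ell^r_{\omega'})}$ and $L^p_{\mu'}(\ell^q_{\nu'}(\ell^r_{\omega'}))$. *)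

theory Defs
  imports "HOL-Analysis.Analysis"
begin

definition epow :: "ennreal \<Rightarrow> real \<Rightarrow> ennreal" where
  "epow x a =
     (if a = 0 then 1
      else if x = top then (if a > 0 then top else 0)
      else if x = 0 then (if a > 0 then 0 else top)
      else ennreal (enn2real x powr a))"

definition Lnorm :: "'a measure \<Rightarrow> real \<Rightarrow> ('a \<Rightarrow> real) \<Rightarrow> ennreal" where
  "Lnorm M r g = epow (\<integral>\<^sup>+ x. ennreal (\<bar>g x\<bar> powr r) \<partial>M) (1 / r)"

definition sup_size ::
  "real \<Rightarrow> 'a set set \<Rightarrow> ('a set \<Rightarrow> ennreal) \<Rightarrow> (('a \<Rightarrow> real) \<Rightarrow> ennreal) \<Rightarrow> ('a \<Rightarrow> real) \<Rightarrow> ennreal"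
  where
  "sup_size s Tests nu N g = (SUP T\<in>Tests. epow (nu T) (- 1 / s) * N (\<lambda>x. indicator T x * g x))"

definition level_meas ::
  "'a set \<Rightarrow> 'a set set \<Rightarrow> ('a set \<Rightarrow> ennreal) \<Rightarrow> (('a \<Rightarrow> real) \<Rightarrow> ennreal) \<Rightarrow> ('a \<Rightarrow> real) \<Rightarrow> real \<Rightarrow> ennreal"
  where
  "level_meas Xs Bs nu S g lam =
     (INF B\<in>{B. B \<in> Bs \<and> S (\<lambda>x. indicator (Xs - B) x * g x) \<le> ennreal lam}. nu B)"

definition Lq_of_dist :: "real \<Rightarrow> (real \<Rightarrow> ennreal) \<Rightarrow> ennreal" where
  "Lq_of_dist q d =
     epow (\<integral>\<^sup>+ t. ennreal (q * t powr (q - 1)) * d t * indicator {0<..} t \<partial>lborel) (1 / q)"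

type_synonym pt = "real \<times> real \<times> real"

definition Xsp :: "pt set" where
  "Xsp = UNIV \<times> {0<..} \<times> UNIV"

definition dyI :: "int \<Rightarrow> int \<Rightarrow> real set" where
  "dyI m l = {2 powi l * of_int m <.. 2 powi l * (of_int m + 1)}"

definition tile :: "int \<Rightarrow> int \<Rightarrow> int \<Rightarrow> pt set" where
  "tile m l n = dyI m l \<times> {2 powi (l - 1) <.. 2 powi l} \<times> dyI n (- l)"

definition strip :: "int \<Rightarrow> int \<Rightarrow> pt set" where
  "strip m l = dyI m l \<times> {0 <.. 2 powi l} \<times> UNIV"

definition Nidx :: "int \<Rightarrow> int \<Rightarrow> int \<Rightarrow> int" where
  "Nidx n l l' = (THE N. dyI n (- l) \<subseteq> dyI N (- l'))"

definition tree :: "int \<Rightarrow> int \<Rightarrow> int \<Rightarrow> pt set" where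
  "tree m l n = (\<Union>l'\<in>{..l}. \<Union>m'\<in>{m'. dyI m' l' \<subseteq> dyI m l}. tile m' l' (Nidx n l l'))"

text \<open>Covering outer measures; a subcollection of strips/trees is indexed by its set of
  parameters (distinct parameters give distinct sets).\<close>
definition mu :: "pt set \<Rightarrow> ennreal" where
  "mu A = (INF K\<in>{K. A \<subseteq> (\<Union>(m, l)\<in>K. strip m l)}.
             \<integral>\<^sup>+ k. ennreal (2 powi snd k) \<partial>count_space K)"

definition nu :: "pt set \<Rightarrow> ennreal" where
  "nu A = (INF K\<in>{K. A \<subseteq> (\<Union>(m, l, n)\<in>K. tree m l n)}.
             \<integral>\<^sup>+ k. ennreal (2 powi fst (snd k)) \<partial>count_space K)"

definition Strips :: "pt set set" where
  "Strips = (\<lambda>(m, l). strip m l) ` UNIV"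

definition Trees :: "pt set set" where
  "Trees = (\<lambda>(m, l, n). tree m l n) ` UNIV"

text \<open>Admissible exceptional sets: omega-measurable subsets of X.\<close>
definition Bmeas :: "pt set set" where
  "Bmeas = {B. B \<in> sets lebesgue \<and> B \<subseteq> Xsp}"

definition Linf_nu :: "real \<Rightarrow> (pt \<Rightarrow> real) \<Rightarrow> ennreal" where
  "Linf_nu r g = sup_size r Trees nu (Lnorm lebesgue r) g"

definition Lq_nu :: "real \<Rightarrow> real \<Rightarrow> (pt \<Rightarrow> real) \<Rightarrow> ennreal" where
  "Lq_nu q r g = Lq_of_dist q (level_meas Xsp Bmeas nu (Linf_nu r) g)"

definition Linf_mu :: "real \<Rightarrow> real \<Rightarrow> (pt \<Rightarrow> real) \<Rightarrow> ennreal" where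
  "Linf_mu q r g = sup_size q Strips mu (Lq_nu q r) g"

definition Lp_mu :: "real \<Rightarrow> real \<Rightarrow> real \<Rightarrow> (pt \<Rightarrow> real) \<Rightarrow> ennreal" where
  "Lp_mu p q r g = Lq_of_dist p (level_meas Xsp Bmeas mu (Linf_mu q r) g)"

definition XJ :: "nat \<Rightarrow> pt set" where
  "XJ J = {- (2 ^ J * real J) <.. 2 ^ J * real J} \<times> {2 powi (- int J) <.. 2 ^ J}
          \<times> {- (2 ^ J * real J) <.. 2 ^ J * real J}"

type_synonym dpt = "int \<times> int \<times> int"

definition dstrip :: "int \<Rightarrow> int \<Rightarrow> dpt set" where
  "dstrip m l = {(m', l', n'). l' \<le> l \<and> 2 ^ nat (l - l') * m \<le> m' \<and> m' < 2 ^ nat (l - l') * (m + 1)}"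

definition dtree :: "int \<Rightarrow> int \<Rightarrow> int \<Rightarrow> dpt set" where
  "dtree m l n = {(m', l', n'). l' \<le> l \<and> 2 ^ nat (l - l') * m \<le> m' \<and> m' < 2 ^ nat (l - l') * (m + 1)
                    \<and> n' = Nidx n l l'}"

definition dmu :: "dpt set \<Rightarrow> ennreal" where
  "dmu A = (INF K\<in>{K. A \<subseteq> (\<Union>(m, l)\<in>K. dstrip m l)}.
             \<integral>\<^sup>+ k. ennreal (2 powi snd k) \<partial>count_space K)"

definition dnu :: "dpt set \<Rightarrow> ennreal" where
  "dnu A = (INF K\<in>{K. A \<subseteq> (\<Union>(m, l, n)\<in>K. dtree m l n)}.
             \<integral>\<^sup>+ k. ennreal (2 powi fst (snd k)) \<partial>count_space K)"

definition dLinf_nu :: "real \<Rightarrow> (dpt \<Rightarrow> real) \<Rightarrow> ennreal" where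
  "dLinf_nu r G = sup_size r {A. A \<noteq> {}} dnu (Lnorm (count_space UNIV) r) G"

definition dLq_nu :: "real \<Rightarrow> real \<Rightarrow> (dpt \<Rightarrow> real) \<Rightarrow> ennreal" where
  "dLq_nu q r G = Lq_of_dist q (level_meas UNIV UNIV dnu (dLinf_nu r) G)"

definition dLinf_mu :: "real \<Rightarrow> real \<Rightarrow> (dpt \<Rightarrow> real) \<Rightarrow> ennreal" where
  "dLinf_mu q r G = sup_size q {A. A \<noteq> {}} dmu (dLq_nu q r) G"

definition dLp_mu :: "real \<Rightarrow> real \<Rightarrow> real \<Rightarrow> (dpt \<Rightarrow> real) \<Rightarrow> ennreal" where
  "dLp_mu p q r G = Lq_of_dist p (level_meas UNIV UNIV dmu (dLinf_mu q r) G)"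

text \<open>F(f,r)(m,l,n) = || f 1_{H(m,l,n)} ||_{L^r(omega)} (finite under the hypotheses).\<close>
definition Fdisc :: "(pt \<Rightarrow> real) \<Rightarrow> real \<Rightarrow> dpt \<Rightarrow> real" where
  "Fdisc f r = (\<lambda>(m, l, n). enn2real (Lnorm lebesgue r (\<lambda>x. indicator (tile m l n) x * f x)))"

end

theory Submission
  imports Defs
begin

text \<open>The tiles \<open>H(m,l,n)\<close> partition \<open>X\<close>, and the map sending a point to the index of its tile
  carries every tree and every strip onto the corresponding discrete tree or strip. Hence the
  outer measures agree on unions of tiles, the \<open>L\<^sup>r(\<omega>)\<close> norm of \<open>f\<close> on a union of tiles is the
  \<open>\<ell>\<^sup>r\<close> norm of \<open>F(f,r)\<close> on the corresponding index set, and an exceptional set may be enlarged to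
  the union of the tiles it meets without changing its outer measure.

  What remains is that the discrete sizes are suprema over all nonempty sets instead of trees
  or strips. For \<open>\<ell>\<^sup>r\<close> this is harmless: cover a set by trees and add up the \<open>\<ell>\<^sup>r\<close> masses. For
  \<open>\<ell>\<^sup>q\<^sub>\<nu>(\<ell>\<^sup>r)\<close> cover a set by strips and keep only the maximal ones, which are pairwise
  disjoint; the \<open>q\<close>-th power of the discrete \<open>L\<^sup>q\<^sub>\<nu>(\<ell>\<^sup>r)\<close> quasi-norm is subadditive over disjoint
  strips, because a tree either lies in one of them or meets only strips of smaller scale, in
  subtrees over disjoint dyadic subintervals of its base.\<close>

section \<open>Dyadic intervals and the tile index\<close>

lemma div_eq_iff_bounds: "(0::int) < d \<Longrightarrow> (d * m \<le> x \<and> x < d * (m + 1)) \<longleftrightarrow> x div d = m"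
  by (smt (verit, del_insts) minus_mod_eq_mult_div nonzero_mult_div_cancel_left pos_mod_sign
        zdiv_mono1)

lemma minus_one_minus_div: "(0::int) < d \<Longrightarrow> (- b - 1) div d = - (b div d) - 1"
proof -
  assume d: "0 < d"
  have "d * (b div d) \<le> b" "b < d * (b div d + 1)"
    using div_eq_iff_bounds[OF d, of "b div d" b] by simp_all
  then show ?thesis
    using div_eq_iff_bounds[OF d, of "- (b div d) - 1" "- b - 1"] by (simp add: algebra_simps)
qed

lemma div_power2_div_power2: "(x::int) div 2 ^ a div 2 ^ b = x div 2 ^ (a + b)"
  by (simp add: power_add zdiv_zmult2_eq)

lemma div_power2_chain:
  assumes "a \<le> b" "b \<le> c"
  shows "(x::int) div 2 ^ nat (c - a) = x div 2 ^ nat (b - a) div 2 ^ nat (c - b)"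
proof -
  have "nat (c - a) = nat (b - a) + nat (c - b)"
    using assms by simp
  then show ?thesis
    by (simp add: div_power2_div_power2)
qed

lemma two_powi_split: "l' \<le> l \<Longrightarrow> (2::real) powi l = 2 powi l' * 2 ^ nat (l - l')"
proof -
  assume "l' \<le> l"
  then have "l = l' + int (nat (l - l'))"
    by simp
  then have "(2::real) powi l = 2 powi l' * 2 powi (int (nat (l - l')))"
    by (metis power_int_add zero_neq_numeral)
  then show ?thesis
    by (simp add: power_int_def)
qed

lemma two_powi_eq_powr: "(2::real) powi l = 2 powr of_int l"
  by (simp add: powr_real_of_int')

lemma two_powi_mono: "l' \<le> l \<Longrightarrow> (2::real) powi l' \<le> 2 powi l"
  by (rule power_int_increasing) auto

lemma of_int_less_two_powi: "of_int l < (2::real) powi l"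
proof (cases "0 \<le> l")
  case True
  then have "(2::real) powi l = 2 ^ nat l"
    by (simp add: power_int_def)
  moreover have "real (nat l) < 2 ^ nat l"
    by (rule of_nat_less_two_power)
  ultimately show ?thesis
    using True by simp
next
  case False
  then show ?thesis
    using zero_less_power_int[of "2::real" l] by linarith
qed

definition dyadic_index :: "int \<Rightarrow> real \<Rightarrow> int" where
  "dyadic_index l x = \<lceil>x / 2 powi l\<rceil> - 1"

lemma mem_dyI_iff: "x \<in> dyI m l \<longleftrightarrow> dyadic_index l x = m"
proof -
  have "x \<in> dyI m l \<longleftrightarrow> of_int m < x / 2 powi l \<and> x / 2 powi l \<le> of_int m + 1"
    unfolding dyI_def by (auto simp: field_simps)
  also have "\<dots> \<longleftrightarrow> \<lceil>x / 2 powi l\<rceil> = m + 1"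
    by (simp add: ceiling_eq_iff)
  finally show ?thesis
    unfolding dyadic_index_def by linarith
qed

lemma right_endpoint_mem_dyI: "2 powi l * (of_int m + 1) \<in> dyI m l"
  unfolding dyI_def by simp

lemma dyadic_index_coarsen:
  assumes "l' \<le> l"
  shows "dyadic_index l x = dyadic_index l' x div 2 ^ nat (l - l')"
proof -
  define d :: int where "d = 2 ^ nat (l - l')"
  have "- (x / 2 powi l) = - (x / 2 powi l') / real_of_int d"
    using two_powi_split[OF assms] by (simp add: d_def)
  then have "\<lceil>x / 2 powi l\<rceil> = - \<lfloor>- (x / 2 powi l') / real_of_int d\<rfloor>"
    by (simp only: ceiling_def)
  also have "\<dots> = - (\<lfloor>- (x / 2 powi l')\<rfloor> div d)"
    by (subst floor_divide_real_eq_div) (simp_all add: d_def)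
  finally show ?thesis
    unfolding dyadic_index_def d_def[symmetric]
    by (simp add: ceiling_def minus_one_minus_div d_def)
qed

lemma dyI_subset_iff:
  assumes "l' \<le> l"
  shows "dyI m' l' \<subseteq> dyI m l \<longleftrightarrow> m' div 2 ^ nat (l - l') = m"
proof
  assume "dyI m' l' \<subseteq> dyI m l"
  then have "2 powi l' * (of_int m' + 1) \<in> dyI m l"
    using right_endpoint_mem_dyI by blast
  then show "m' div 2 ^ nat (l - l') = m"
    using right_endpoint_mem_dyI[of l' m'] by (simp add: mem_dyI_iff dyadic_index_coarsen[OF assms])
next
  assume "m' div 2 ^ nat (l - l') = m"
  then show "dyI m' l' \<subseteq> dyI m l"
    by (auto simp: mem_dyI_iff dyadic_index_coarsen[OF assms])
qed

lemma Nidx_eq: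
  assumes "l' \<le> l"
  shows "Nidx n l l' = n div 2 ^ nat (l - l')"
proof -
  have "dyI n (- l) \<subseteq> dyI N (- l') \<longleftrightarrow> N = n div 2 ^ nat (l - l')" for N
    using dyI_subset_iff[of "- l" "- l'" n N] assms by auto
  then show ?thesis
    unfolding Nidx_def by simp
qed

definition scale_index :: "real \<Rightarrow> int" where
  "scale_index s = \<lceil>log 2 s\<rceil>"

lemma scale_index_eq_iff:
  assumes "0 < s"
  shows "scale_index s = l \<longleftrightarrow> s \<in> {2 powi (l - 1) <.. 2 powi l}"
proof -
  have "scale_index s = l \<longleftrightarrow> of_int l - 1 < log 2 s \<and> log 2 s \<le> of_int l"
    unfolding scale_index_def by (simp add: ceiling_eq_iff)
  also have "\<dots> \<longleftrightarrow> 2 powr (of_int (l - 1)) < s \<and> s \<le> 2 powr (of_int l)"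
    using assms by (simp add: less_log_iff log_le_iff)
  finally show ?thesis
    by (simp add: two_powi_eq_powr)
qed

lemma scale_index_le_iff: "0 < s \<Longrightarrow> scale_index s \<le> l \<longleftrightarrow> s \<le> 2 powi l"
  unfolding scale_index_def by (simp add: ceiling_le_iff log_le_iff two_powi_eq_powr)

definition tile_index :: "pt \<Rightarrow> dpt" where
  "tile_index = (\<lambda>(x, s, y). (dyadic_index (scale_index s) x, scale_index s, dyadic_index (- scale_index s) y))"

lemma mem_Xsp_iff [simp]: "(x, s, y) \<in> Xsp \<longleftrightarrow> 0 < s"
  unfolding Xsp_def by simp

lemma mem_tile_iff: "p \<in> tile m l n \<longleftrightarrow> p \<in> Xsp \<and> tile_index p = (m, l, n)"
proof -
  obtain x s y where p: "p = (x, s, y)"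
    by (cases p) auto
  have pos: "0 < s" if "s \<in> {2 powi (l - 1) <.. 2 powi l}"
    using that less_trans[of 0 "2 powi (l - 1)" s] by simp
  have "p \<in> tile m l n \<longleftrightarrow>
      dyadic_index l x = m \<and> s \<in> {2 powi (l - 1) <.. 2 powi l} \<and> dyadic_index (- l) y = n"
    unfolding tile_def p by (simp add: mem_dyI_iff)
  also have "\<dots> \<longleftrightarrow> p \<in> Xsp \<and> tile_index p = (m, l, n)"
    using pos scale_index_eq_iff[of s l] unfolding p tile_index_def by auto
  finally show ?thesis .
qed

definition tile_union :: "dpt set \<Rightarrow> pt set" where
  "tile_union S = {p \<in> Xsp. tile_index p \<in> S}"

lemma tile_eq_tile_union: "tile m l n = tile_union {(m, l, n)}"
  unfolding tile_union_def by (auto simp: mem_tile_iff)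

lemma tile_union_subset_Xsp: "tile_union S \<subseteq> Xsp"
  unfolding tile_union_def by auto

lemma Xsp_diff_tile_union: "Xsp - tile_union S = tile_union (- S)"
  unfolding tile_union_def by auto

lemma subset_tile_union_iff: "B \<subseteq> Xsp \<Longrightarrow> B \<subseteq> tile_union S \<longleftrightarrow> tile_index ` B \<subseteq> S"
  unfolding tile_union_def by auto

lemma tile_index_image_tile_union: "tile_index ` tile_union S = S"
proof -
  have "k \<in> tile_index ` tile_union S" if "k \<in> S" for k
  proof -
    obtain m l n where k: "k = (m, l, n)"
      by (cases k) auto
    define p :: pt where "p = (2 powi l * (of_int m + 1), 2 powi l, 2 powi (- l) * (of_int n + 1))"
    have "p \<in> tile m l n"
      unfolding tile_def p_def using right_endpoint_mem_dyI by (auto simp: power_int_diff)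
    then have "p \<in> Xsp" "tile_index p = k"
      by (simp_all add: mem_tile_iff k)
    then show ?thesis
      using that unfolding tile_union_def by (intro image_eqI[of _ _ p]) auto
  qed
  then show ?thesis
    unfolding tile_union_def by auto
qed

lemma dtree_altdef:
  "dtree m l n = {(m', l', n'). l' \<le> l \<and> m' div 2 ^ nat (l - l') = m \<and> n' = n div 2 ^ nat (l - l')}"
  unfolding dtree_def using div_eq_iff_bounds[of "2 ^ nat (l - _)"] Nidx_eq
  by (auto simp: mult.commute)

lemma dstrip_altdef:
  "dstrip m l = {(m', l', n'). l' \<le> l \<and> m' div 2 ^ nat (l - l') = m}"
  unfolding dstrip_def using div_eq_iff_bounds[of "2 ^ nat (l - _)"]
  by (auto simp: mult.commute)

lemma mem_dtree_self: "(m, l, n) \<in> dtree m l n"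
  unfolding dtree_altdef by simp

lemma mem_dstrip_self: "(m, l, n) \<in> dstrip m l"
  unfolding dstrip_altdef by simp

lemma tree_eq_tile_union: "tree m l n = tile_union (dtree m l n)"
proof -
  have "p \<in> tree m l n \<longleftrightarrow> p \<in> Xsp \<and> tile_index p \<in> dtree m l n" for p
  proof -
    have "p \<in> tree m l n \<longleftrightarrow>
        (\<exists>l'\<le>l. \<exists>m'. dyI m' l' \<subseteq> dyI m l \<and> p \<in> tile m' l' (Nidx n l l'))"
      unfolding tree_def by auto
    also have "\<dots> \<longleftrightarrow> (\<exists>l'\<le>l. \<exists>m'. m' div 2 ^ nat (l - l') = m \<and> p \<in> Xsp
        \<and> tile_index p = (m', l', n div 2 ^ nat (l - l')))"
      by (auto simp: dyI_subset_iff Nidx_eq mem_tile_iff)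
    also have "\<dots> \<longleftrightarrow> p \<in> Xsp \<and> tile_index p \<in> dtree m l n"
      unfolding dtree_altdef by (cases "tile_index p") auto
    finally show ?thesis .
  qed
  then show ?thesis
    unfolding tile_union_def by auto
qed

lemma strip_eq_tile_union: "strip m l = tile_union (dstrip m l)"
proof -
  have "p \<in> strip m l \<longleftrightarrow> p \<in> Xsp \<and> tile_index p \<in> dstrip m l" for p
  proof -
    obtain x s y where p: "p = (x, s, y)"
      by (cases p) auto
    have "p \<in> strip m l \<longleftrightarrow> dyadic_index l x = m \<and> 0 < s \<and> s \<le> 2 powi l"
      unfolding strip_def p by (simp add: mem_dyI_iff)
    also have "\<dots> \<longleftrightarrow> 0 < s \<and> scale_index s \<le> l
        \<and> dyadic_index (scale_index s) x div 2 ^ nat (l - scale_index s) = m"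
      using scale_index_le_iff[of s l] dyadic_index_coarsen[of "scale_index s" l x] by auto
    also have "\<dots> \<longleftrightarrow> p \<in> Xsp \<and> tile_index p \<in> dstrip m l"
      unfolding dstrip_altdef p tile_index_def by auto
    finally show ?thesis .
  qed
  then show ?thesis
    unfolding tile_union_def by auto
qed

lemma epow_top: "0 < a \<Longrightarrow> epow top a = top"
  unfolding epow_def by simp

lemma epow_zero: "0 < a \<Longrightarrow> epow 0 a = 0"
  unfolding epow_def by simp

lemma epow_top_neg: "a < 0 \<Longrightarrow> epow top a = 0"
  unfolding epow_def by simp

lemma epow_ennreal: "0 < x \<Longrightarrow> epow (ennreal x) a = ennreal (x powr a)"
  unfolding epow_def by auto

lemma epow_ne_top: "0 < a \<Longrightarrow> x \<noteq> top \<Longrightarrow> epow x a \<noteq> top"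
  unfolding epow_def by auto

lemma ennreal_pos_cases:
  fixes x :: ennreal
  obtains "x = 0" | "x = top" | x' where "x = ennreal x'" "0 < x'"
  by (metis ennreal_cases ennreal_less_zero_iff not_gr_zero)

lemma epow_eq_0_iff: "0 < a \<Longrightarrow> epow x a = 0 \<longleftrightarrow> x = 0"
  by (cases x rule: ennreal_pos_cases) (auto simp: epow_zero epow_top epow_ennreal)

lemma epow_mono:
  assumes "0 < a" "x \<le> y"
  shows "epow x a \<le> epow y a"
proof (cases x rule: ennreal_pos_cases)
  case 1
  then show ?thesis
    using assms by (simp add: epow_zero)
next
  case 2
  then show ?thesis
    using assms by (simp add: epow_top top_unique)
next
  case (3 x')
  show ?thesis
  proof (cases y rule: ennreal_pos_cases)
    case (3 y')
    then show ?thesis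
      using assms \<open>x = ennreal x'\<close> \<open>0 < x'\<close> by (simp add: epow_ennreal powr_mono2)
  qed (use assms 3 in \<open>simp_all add: epow_top\<close>)
qed

lemma ennreal_epow_inverse_powr:
  assumes "0 < r" "x < \<infinity>"
  shows "ennreal (enn2real (epow x (1 / r)) powr r) = x"
  using assms by (cases x rule: ennreal_pos_cases) (simp_all add: epow_zero epow_ennreal powr_powr)

lemma powr_inverse_le_iff:
  assumes s: "0 < s" and x: "0 < x" and S: "0 < (S::real)"
  shows "x powr (1 / s) \<le> S \<longleftrightarrow> x \<le> S powr s"
proof
  assume "x powr (1 / s) \<le> S"
  then have "(x powr (1 / s)) powr s \<le> S powr s"
    using s by (intro powr_mono2) auto
  then show "x \<le> S powr s"
    using s x by (simp add: powr_powr)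
next
  assume "x \<le> S powr s"
  then have "x powr (1 / s) \<le> (S powr s) powr (1 / s)"
    using s x by (intro powr_mono2) auto
  then show "x powr (1 / s) \<le> S"
    using s S by (simp add: powr_powr)
qed

lemma powr_quotient_le_iff:
  fixes s a b S :: real
  assumes s: "0 < s" and a: "0 < a" and b: "0 < b" and S: "0 < S"
  shows "a powr (- 1 / s) * b powr (1 / s) \<le> S \<longleftrightarrow> b \<le> S powr s * a"
proof -
  have "a powr (- 1 / s) * b powr (1 / s) = (b / a) powr (1 / s)"
    using powr_divide[of b a "1 / s"] powr_minus[of a "1 / s"]
    by (simp add: divide_inverse mult.commute)
  also have "\<dots> \<le> S \<longleftrightarrow> b / a \<le> S powr s"
    using powr_inverse_le_iff[OF s _ S, of "b / a"] a b by simp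
  also have "\<dots> \<longleftrightarrow> b \<le> S powr s * a"
    using a by (simp add: divide_le_eq)
  finally show ?thesis .
qed

lemma epow_quotient_leI:
  assumes s: "0 < s" and h: "b \<le> epow S s * a"
  shows "epow a (- 1 / s) * epow b (1 / s) \<le> S"
proof -
  consider "b = 0" | "S = top" | "a = top" | "b \<noteq> 0" "S \<noteq> top" "a \<noteq> top"
    by blast
  then show ?thesis
  proof cases
    case 4
    then have "S \<noteq> 0" "a \<noteq> 0"
      using h s by (auto simp: epow_zero)
    then obtain S' a' where S': "S = ennreal S'" "0 < S'" and a': "a = ennreal a'" "0 < a'"
      using 4 by (metis ennreal_pos_cases)
    then have b: "b \<le> ennreal (S' powr s * a')"
      using h by (simp add: epow_ennreal ennreal_mult')
    then obtain b' where b': "b = ennreal b'" "0 < b'"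
      using 4 by (cases b rule: ennreal_pos_cases) (auto simp: top_unique)
    then have "a' powr (- 1 / s) * b' powr (1 / s) \<le> S'"
      using b b'(1) \<open>0 < a'\<close> powr_quotient_le_iff[OF s \<open>0 < a'\<close> \<open>0 < b'\<close> \<open>0 < S'\<close>]
      by (simp add: ennreal_le_iff)
    then show ?thesis
      using S' a' b' by (simp add: epow_ennreal ennreal_mult'[symmetric] ennreal_leI)
  qed (use s in \<open>simp_all add: epow_zero epow_top_neg\<close>)
qed

lemma epow_quotient_leD:
  assumes s: "0 < s" and a: "0 < a" "a < top" and h: "epow a (- 1 / s) * epow b (1 / s) \<le> S"
  shows "b \<le> epow S s * a"
proof -
  obtain a' where a': "a = ennreal a'" "0 < a'"
    using a by (cases a rule: ennreal_pos_cases) auto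
  consider "b = 0" | "S = top" | "b \<noteq> 0" "S \<noteq> top"
    by blast
  then show ?thesis
  proof cases
    case 3
    have pos: "0 < epow a (- 1 / s)"
      using a' by (simp add: epow_ennreal)
    then have "b \<noteq> top" "S \<noteq> 0"
      using h s 3 by (auto simp: epow_top epow_eq_0_iff ennreal_mult_eq_top_iff top_unique)
    then obtain S' b' where S': "S = ennreal S'" "0 < S'" and b': "b = ennreal b'" "0 < b'"
      using 3 by (metis ennreal_pos_cases)
    then have "a' powr (- 1 / s) * b' powr (1 / s) \<le> S'"
      using h a' by (simp add: epow_ennreal ennreal_mult'[symmetric])
    then have "b' \<le> S' powr s * a'"
      using powr_quotient_le_iff[OF s \<open>0 < a'\<close> \<open>0 < b'\<close> \<open>0 < S'\<close>] by simp
    then show ?thesis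
      using S' a' b' by (simp add: epow_ennreal ennreal_mult'[symmetric])
  qed (use a s in \<open>simp_all add: epow_top ennreal_mult_eq_top_iff\<close>)
qed

definition abs_monotone :: "(('a \<Rightarrow> real) \<Rightarrow> ennreal) \<Rightarrow> bool" where
  "abs_monotone N \<longleftrightarrow> (\<forall>g h. (\<forall>x. \<bar>g x\<bar> \<le> \<bar>h x\<bar>) \<longrightarrow> N g \<le> N h)"

lemma abs_monotoneD: "abs_monotone N \<Longrightarrow> (\<And>x. \<bar>g x\<bar> \<le> \<bar>h x\<bar>) \<Longrightarrow> N g \<le> N h"
  unfolding abs_monotone_def by blast

lemma abs_indicator_mult_mono:
  "\<bar>g x\<bar> \<le> \<bar>h x\<bar> \<Longrightarrow> \<bar>indicator T x * (g x :: real)\<bar> \<le> \<bar>indicator T x * h x\<bar>"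
  by (simp add: indicator_def)

lemma abs_monotone_Lnorm: "0 < r \<Longrightarrow> abs_monotone (Lnorm M r)"
  unfolding abs_monotone_def Lnorm_def
  by (auto intro!: epow_mono nn_integral_mono ennreal_leI powr_mono2)

lemma abs_monotone_sup_size:
  assumes "abs_monotone N"
  shows "abs_monotone (sup_size s Ts nf N)"
  unfolding abs_monotone_def
proof (intro allI impI)
  fix g h :: "'a \<Rightarrow> real"
  assume "\<forall>x. \<bar>g x\<bar> \<le> \<bar>h x\<bar>"
  then have "N (\<lambda>x. indicator T x * g x) \<le> N (\<lambda>x. indicator T x * h x)" for T
    by (intro abs_monotoneD[OF assms] abs_indicator_mult_mono) simp
  then show "sup_size s Ts nf N g \<le> sup_size s Ts nf N h"
    unfolding sup_size_def by (intro SUP_mono' mult_left_mono) auto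
qed

lemma level_meas_mono:
  assumes "abs_monotone S" "\<And>x. \<bar>g x\<bar> \<le> \<bar>h x\<bar>"
  shows "level_meas Xs Bs nf S g lam \<le> level_meas Xs Bs nf S h lam"
proof -
  have "S (\<lambda>x. indicator (Xs - B) x * g x) \<le> S (\<lambda>x. indicator (Xs - B) x * h x)" for B
    by (rule abs_monotoneD[OF assms(1)]) (simp add: abs_indicator_mult_mono assms(2))
  then show ?thesis
    unfolding level_meas_def by (intro INF_superset_mono) (auto intro: order_trans)
qed

lemma level_meas_antimono:
  "lam \<le> lam' \<Longrightarrow> level_meas Xs Bs nf S g lam' \<le> level_meas Xs Bs nf S g lam"
  unfolding level_meas_def by (rule INF_superset_mono) (auto intro: order_trans ennreal_leI)

lemma Lq_of_dist_mono: "0 < q \<Longrightarrow> (\<And>t. d t \<le> d' t) \<Longrightarrow> Lq_of_dist q d \<le> Lq_of_dist q d'"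
  unfolding Lq_of_dist_def by (auto intro!: epow_mono nn_integral_mono mult_right_mono mult_left_mono)

lemma abs_monotone_Lq_of_dist:
  "0 < q \<Longrightarrow> abs_monotone S \<Longrightarrow> abs_monotone (\<lambda>g. Lq_of_dist q (level_meas Xs Bs nf S g))"
  unfolding abs_monotone_def[of "\<lambda>g. Lq_of_dist q (level_meas Xs Bs nf S g)"]
  by (auto intro!: Lq_of_dist_mono level_meas_mono)

lemma abs_monotone_Linf_nu: "0 < r \<Longrightarrow> abs_monotone (Linf_nu r)"
  unfolding Linf_nu_def[abs_def] by (intro abs_monotone_sup_size abs_monotone_Lnorm)

lemma abs_monotone_Lq_nu: "0 < q \<Longrightarrow> 0 < r \<Longrightarrow> abs_monotone (Lq_nu q r)"
  unfolding Lq_nu_def[abs_def] by (intro abs_monotone_Lq_of_dist abs_monotone_Linf_nu)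

lemma abs_monotone_Linf_mu: "0 < q \<Longrightarrow> 0 < r \<Longrightarrow> abs_monotone (Linf_mu q r)"
  unfolding Linf_mu_def[abs_def] by (intro abs_monotone_sup_size abs_monotone_Lq_nu)

lemma abs_monotone_dLinf_nu: "0 < r \<Longrightarrow> abs_monotone (dLinf_nu r)"
  unfolding dLinf_nu_def[abs_def] by (intro abs_monotone_sup_size abs_monotone_Lnorm)

lemma borel_measurable_antimono_ennreal:
  fixes d :: "real \<Rightarrow> ennreal"
  assumes "\<And>x y. x \<le> y \<Longrightarrow> d y \<le> d x"
  shows "d \<in> borel_measurable borel"
proof (rule borel_measurableI_greater)
  fix y
  have "is_interval {x. y < d x}"
    unfolding is_interval_1 using assms by (auto intro: less_le_trans)
  then show "{x \<in> space borel. y < d x} \<in> sets borel"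
    using real_interval_borel_measurable by simp
qed

lemma nn_integral_count_space_subset:
  "M \<subseteq> K \<Longrightarrow> (\<integral>\<^sup>+k. f k * indicator M k \<partial>count_space K) = (\<integral>\<^sup>+k. f k \<partial>count_space M)"
  by (subst (1 2) nn_integral_count_space_indicator)
    (auto intro!: nn_integral_cong simp: indicator_def)

lemma nn_integral_count_space_mono_set:
  "M \<subseteq> K \<Longrightarrow> (\<integral>\<^sup>+k. f k \<partial>count_space M) \<le> (\<integral>\<^sup>+k. f k \<partial>count_space K)"
  by (subst (1 2) nn_integral_count_space_indicator)
    (auto intro!: nn_integral_mono simp: indicator_def)

lemma nn_integral_count_space_le_sum:
  assumes "countable I" "\<And>x. x \<in> A \<Longrightarrow> f x \<le> (\<integral>\<^sup>+i. g i x \<partial>count_space I)"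
  shows "(\<integral>\<^sup>+x. f x \<partial>count_space A) \<le> (\<integral>\<^sup>+i. (\<integral>\<^sup>+x. g i x \<partial>count_space A) \<partial>count_space I)"
proof -
  have "(\<integral>\<^sup>+x. f x \<partial>count_space A) \<le> (\<integral>\<^sup>+x. (\<integral>\<^sup>+i. g i x \<partial>count_space I) \<partial>count_space A)"
    using assms(2) by (intro nn_integral_mono_AE) (simp add: AE_count_space)
  also have "\<dots> = (\<integral>\<^sup>+i. (\<integral>\<^sup>+x. g i x \<partial>count_space A) \<partial>count_space I)"
    by (rule nn_integral_count_space_nn_integral[OF assms(1)]) simp
  finally show ?thesis .
qed

lemma nn_integral_count_space_UN_le:
  assumes "countable I"
  shows "(\<integral>\<^sup>+x. f x \<partial>count_space (\<Union>i\<in>I. A i))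
    \<le> (\<integral>\<^sup>+i. (\<integral>\<^sup>+x. f x \<partial>count_space (A i)) \<partial>count_space I)"
proof -
  have "f x \<le> (\<integral>\<^sup>+i. f x * indicator (A i) x \<partial>count_space I)" if "x \<in> (\<Union>i\<in>I. A i)" for x
    using that nn_integral_ge_point[of _ I "\<lambda>i. f x * indicator (A i) x"] by force
  then have "(\<integral>\<^sup>+x. f x \<partial>count_space (\<Union>i\<in>I. A i))
      \<le> (\<integral>\<^sup>+i. (\<integral>\<^sup>+x. f x * indicator (A i) x \<partial>count_space (\<Union>i\<in>I. A i)) \<partial>count_space I)"
    by (rule nn_integral_count_space_le_sum[OF assms])
  also have "\<dots> = (\<integral>\<^sup>+i. (\<integral>\<^sup>+x. f x \<partial>count_space (A i)) \<partial>count_space I)"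
    by (intro nn_integral_cong_AE) (auto simp: AE_count_space intro!: nn_integral_count_space_subset)
  finally show ?thesis .
qed

lemma geometric_weights_le:
  assumes "countable I" "0 < e"
  shows "(\<integral>\<^sup>+i. ennreal (e * (1/2) ^ Suc (to_nat_on I i)) \<partial>count_space I) \<le> ennreal e"
proof -
  define h where "h n = ennreal (e * (1/2) ^ Suc n)" for n
  have "(\<integral>\<^sup>+i. h (to_nat_on I i) \<partial>count_space I) = (\<integral>\<^sup>+n. h n \<partial>count_space (to_nat_on I ` I))"
    by (rule nn_integral_bij_count_space) (simp add: assms(1) bij_betw_def inj_on_to_nat_on)
  also have "\<dots> \<le> (\<integral>\<^sup>+n. h n \<partial>count_space UNIV)"
    by (rule nn_integral_count_space_mono_set) simp
  also have "\<dots> = ennreal (\<Sum>n. e * (1/2) ^ Suc n)"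
    unfolding h_def nn_integral_count_space_nat using assms(2)
    by (intro suminf_ennreal2) (auto intro!: summable_mult summable_geometric)
  also have "(\<Sum>n. e * (1/2) ^ Suc n) = e"
    using sums_mult[OF power_half_series, of e] by (simp add: sums_iff)
  finally show ?thesis
    unfolding h_def .
qed

text \<open>The \<open>i\<close>-th choice is within \<open>\<epsilon> / 2\<^sup>i\<^sup>+\<^sup>1\<close> of its infimum, for an enumeration
  \<open>to_nat_on I\<close> of \<open>I\<close>.\<close>

lemma obtain_near_INF_family:
  fixes c :: "'i \<Rightarrow> 'b \<Rightarrow> ennreal"
  assumes I: "countable I" and ne: "\<And>i. i \<in> I \<Longrightarrow> \<exists>y. P i y" and e: "0 < e"
    and fin: "(\<integral>\<^sup>+i. (INF y\<in>{y. P i y}. c i y) \<partial>count_space I) < top"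
  obtains Y where "\<And>i. i \<in> I \<Longrightarrow> P i (Y i)"
    "(\<integral>\<^sup>+i. c i (Y i) \<partial>count_space I) \<le> (\<integral>\<^sup>+i. (INF y\<in>{y. P i y}. c i y) \<partial>count_space I) + ennreal e"
proof -
  define m where "m i = (INF y\<in>{y. P i y}. c i y)" for i
  define w where "w i = e * (1/2) ^ Suc (to_nat_on I i)" for i
  have "\<exists>y. P i y \<and> c i y \<le> m i + ennreal (w i)" if i: "i \<in> I" for i
  proof -
    have "m i < top"
      using nn_integral_ge_point[OF i, of m] fin unfolding m_def by simp
    moreover have "0 < w i"
      unfolding w_def using e by simp
    ultimately have "m i < m i + ennreal (w i)"
      by (cases "m i") (auto simp flip: ennreal_plus intro!: ennreal_lessI)
    then obtain y where "P i y" "c i y < m i + ennreal (w i)"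
      unfolding m_def by (auto simp: INF_less_iff)
    then show ?thesis
      by (auto intro: less_imp_le)
  qed
  then obtain Y where Y: "\<And>i. i \<in> I \<Longrightarrow> P i (Y i) \<and> c i (Y i) \<le> m i + ennreal (w i)"
    by metis
  have "(\<integral>\<^sup>+i. c i (Y i) \<partial>count_space I) \<le> (\<integral>\<^sup>+i. m i + ennreal (w i) \<partial>count_space I)"
    using Y by (intro nn_integral_mono_AE) (auto simp: AE_count_space)
  also have "\<dots> = (\<integral>\<^sup>+i. m i \<partial>count_space I) + (\<integral>\<^sup>+i. ennreal (w i) \<partial>count_space I)"
    by (rule nn_integral_add) auto
  also have "\<dots> \<le> (\<integral>\<^sup>+i. m i \<partial>count_space I) + ennreal e"
    using geometric_weights_le[OF I e] unfolding w_def by (intro add_left_mono)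
  finally show ?thesis
    using that Y unfolding m_def by blast
qed

lemma le_mult_INF:
  fixes c X :: ennreal
  assumes c: "c \<noteq> top" and A: "A \<noteq> {}" and h: "\<And>x. x \<in> A \<Longrightarrow> X \<le> c * f x"
  shows "X \<le> c * (INF x\<in>A. f x)"
proof (cases "c = 0")
  case True
  then show ?thesis
    using A h by auto
next
  case False
  have "X / c \<le> f x" if "x \<in> A" for x
    using h[OF that] c False divide_le_posI_ennreal not_gr_zero by blast
  then have "c * (X / c) \<le> c * (INF x\<in>A. f x)"
    by (intro mult_left_mono INF_greatest) simp_all
  moreover have "c * (X / c) = X"
    using c False by (metis divide_eq_1_ennreal ennreal_divide_times mult_1)
  ultimately show ?thesis
    by simp
qed

definition cover_measure :: "('i \<Rightarrow> 'a set) \<Rightarrow> ('i \<Rightarrow> real) \<Rightarrow> 'a set \<Rightarrow> ennreal" where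
  "cover_measure C w A = (INF K\<in>{K. A \<subseteq> (\<Union>k\<in>K. C k)}. \<integral>\<^sup>+k. ennreal (w k) \<partial>count_space K)"

lemma cover_measure_le:
  "A \<subseteq> (\<Union>k\<in>K. C k) \<Longrightarrow> cover_measure C w A \<le> (\<integral>\<^sup>+k. ennreal (w k) \<partial>count_space K)"
  unfolding cover_measure_def by (rule INF_lower) simp

lemma cover_measure_ge:
  assumes "x \<in> A" "\<And>k. x \<in> C k \<Longrightarrow> c \<le> w k"
  shows "ennreal c \<le> cover_measure C w A"
  unfolding cover_measure_def
proof (rule INF_greatest)
  fix K assume "K \<in> {K. A \<subseteq> (\<Union>k\<in>K. C k)}"
  then obtain k where k: "k \<in> K" "x \<in> C k"
    using assms(1) by blast
  then have "ennreal c \<le> ennreal (w k)"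
    using assms(2) by (simp add: ennreal_leI)
  also have "\<dots> \<le> (\<integral>\<^sup>+k. ennreal (w k) \<partial>count_space K)"
    by (rule nn_integral_ge_point[OF k(1)])
  finally show "ennreal c \<le> (\<integral>\<^sup>+k. ennreal (w k) \<partial>count_space K)" .
qed

lemma cover_measure_empty: "cover_measure C w {} = 0"
  using cover_measure_le[where A="{}" and K="{}"] by (simp add: nn_integral_count_space_finite)

lemma le_mult_cover_measure:
  assumes "c \<noteq> top" "(\<Union>k. C k) = UNIV"
    and "\<And>K. A \<subseteq> (\<Union>k\<in>K. C k) \<Longrightarrow> X \<le> c * (\<integral>\<^sup>+k. ennreal (w k) \<partial>count_space K)"
  shows "X \<le> c * cover_measure C w A"
  unfolding cover_measure_def by (rule le_mult_INF) (use assms in \<open>auto intro: exI[of _ UNIV]\<close>)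

lemma cover_measure_countable_subadditive:
  assumes I: "countable I" and cover: "(\<Union>k. C k) = UNIV"
  shows "cover_measure C w (\<Union>i\<in>I. B i) \<le> (\<integral>\<^sup>+i. cover_measure C w (B i) \<partial>count_space I)"
proof (rule ennreal_le_epsilon)
  fix e :: real
  assume fin: "(\<integral>\<^sup>+i. cover_measure C w (B i) \<partial>count_space I) < top" and e: "0 < e"
  let ?cost = "\<lambda>K. \<integral>\<^sup>+k. ennreal (w k) \<partial>count_space K"
  let ?P = "\<lambda>i K. B i \<subseteq> (\<Union>k\<in>K. C k)"
  have ex: "\<exists>K. ?P i K" for i
    using cover by blast
  have fin': "(\<integral>\<^sup>+i. (INF K\<in>{K. ?P i K}. ?cost K) \<partial>count_space I) < top"
    using fin unfolding cover_measure_def .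
  obtain K where K: "\<And>i. i \<in> I \<Longrightarrow> ?P i (K i)"
    and cost: "(\<integral>\<^sup>+i. ?cost (K i) \<partial>count_space I)
      \<le> (\<integral>\<^sup>+i. (INF K\<in>{K. ?P i K}. ?cost K) \<partial>count_space I) + ennreal e"
    by (rule obtain_near_INF_family[OF I ex e fin']) auto
  have "cover_measure C w (\<Union>i\<in>I. B i) \<le> ?cost (\<Union>i\<in>I. K i)"
    using K by (intro cover_measure_le) blast
  also have "\<dots> \<le> (\<integral>\<^sup>+i. ?cost (K i) \<partial>count_space I)"
    by (rule nn_integral_count_space_UN_le[OF I])
  finally show "cover_measure C w (\<Union>i\<in>I. B i)
      \<le> (\<integral>\<^sup>+i. cover_measure C w (B i) \<partial>count_space I) + ennreal e"
    using cost unfolding cover_measure_def by (rule order_trans)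
qed

abbreviation dtree_of :: "dpt \<Rightarrow> dpt set" where
  "dtree_of k \<equiv> dtree (fst k) (fst (snd k)) (snd (snd k))"

abbreviation dstrip_of :: "int \<times> int \<Rightarrow> dpt set" where
  "dstrip_of k \<equiv> dstrip (fst k) (snd k)"

lemma dnu_eq_cover_measure: "dnu = cover_measure dtree_of (\<lambda>k. 2 powi fst (snd k))"
  unfolding dnu_def cover_measure_def by (simp add: case_prod_beta' fun_eq_iff)

lemma dmu_eq_cover_measure: "dmu = cover_measure dstrip_of (\<lambda>k. 2 powi snd k)"
  unfolding dmu_def cover_measure_def by (simp add: case_prod_beta' fun_eq_iff)

lemma UN_dtree_of: "(\<Union>k. dtree_of k) = UNIV"
  using mem_dtree_self by fastforce

lemma UN_dstrip_of: "(\<Union>k. dstrip_of k) = UNIV"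
  using mem_dstrip_self by fastforce

lemma two_powi_le_dnu: "(m, l, n) \<in> A \<Longrightarrow> ennreal (2 powi l) \<le> dnu A"
  unfolding dnu_eq_cover_measure
  by (rule cover_measure_ge) (auto simp: dtree_altdef intro: two_powi_mono)

lemma two_powi_le_dmu: "(m, l, n) \<in> A \<Longrightarrow> ennreal (2 powi l) \<le> dmu A"
  unfolding dmu_eq_cover_measure
  by (rule cover_measure_ge) (auto simp: dstrip_altdef intro: two_powi_mono)

lemma dnu_le_two_powi: "A \<subseteq> dtree m l n \<Longrightarrow> dnu A \<le> ennreal (2 powi l)"
  unfolding dnu_eq_cover_measure
  using cover_measure_le[where A=A and K="{(m, l, n)}" and C=dtree_of and w="\<lambda>k. 2 powi fst (snd k)"]
  by (simp add: nn_integral_count_space_finite)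

lemma dmu_le_two_powi: "A \<subseteq> dstrip m l \<Longrightarrow> dmu A \<le> ennreal (2 powi l)"
  unfolding dmu_eq_cover_measure
  using cover_measure_le[where A=A and K="{(m, l)}" and C=dstrip_of and w="\<lambda>k. 2 powi snd k"]
  by (simp add: nn_integral_count_space_finite)

lemma dnu_dtree: "dnu (dtree m l n) = ennreal (2 powi l)"
  by (intro antisym dnu_le_two_powi[OF order_refl] two_powi_le_dnu[OF mem_dtree_self])

lemma dmu_dstrip: "dmu (dstrip m l) = ennreal (2 powi l)"
  by (intro antisym dmu_le_two_powi[OF order_refl] two_powi_le_dmu[OF mem_dstrip_self])

lemma dnu_singleton: "dnu {(m, l, n)} = ennreal (2 powi l)"
  by (intro antisym dnu_le_two_powi[of _ m l n] two_powi_le_dnu) (simp_all add: mem_dtree_self)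

lemma dnu_empty: "dnu {} = 0"
  unfolding dnu_eq_cover_measure by (rule cover_measure_empty)

lemma dnu_pos: "A \<noteq> {} \<Longrightarrow> 0 < dnu A"
  using two_powi_le_dnu[of _ _ _ A] by (force intro: less_le_trans[rotated])

lemma dmu_pos: "A \<noteq> {} \<Longrightarrow> 0 < dmu A"
  using two_powi_le_dmu[of _ _ _ A] by (force intro: less_le_trans[rotated])

lemma dnu_countable_subadditive:
  "countable I \<Longrightarrow> dnu (\<Union>i\<in>I. B i) \<le> (\<integral>\<^sup>+i. dnu (B i) \<partial>count_space I)"
  unfolding dnu_eq_cover_measure by (rule cover_measure_countable_subadditive[OF _ UN_dtree_of])

definition Lr_on_Xsp :: "real \<Rightarrow> (pt \<Rightarrow> real) \<Rightarrow> bool" where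
  "Lr_on_Xsp r g \<longleftrightarrow> g \<in> borel_measurable lebesgue \<and> (\<forall>x. x \<notin> Xsp \<longrightarrow> g x = 0)
      \<and> (\<integral>\<^sup>+x. ennreal (\<bar>g x\<bar> powr r) \<partial>lebesgue) < \<infinity>"

lemma tile_sets_lebesgue: "tile m l n \<in> sets lebesgue"
proof -
  have "tile m l n \<in> sets borel"
    unfolding tile_def dyI_def by (intro borel_Times) auto
  then show ?thesis
    by simp
qed

lemma tile_union_sets_lebesgue [measurable]: "tile_union S \<in> sets lebesgue"
proof -
  have "tile_union S = (\<Union>(m, l, n)\<in>S. tile m l n)"
    unfolding tile_union_def by (auto simp: mem_tile_iff)
  then show ?thesis
    by (auto intro!: sets.countable_UN' countableI_type simp: tile_sets_lebesgue)
qed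

lemma Lr_on_Xsp_indicator_mult:
  assumes "Lr_on_Xsp r g" "Y \<in> sets lebesgue"
  shows "Lr_on_Xsp r (\<lambda>x. indicator Y x * g x)"
proof -
  have "(\<integral>\<^sup>+x. ennreal (\<bar>indicator Y x * g x\<bar> powr r) \<partial>lebesgue)
      \<le> (\<integral>\<^sup>+x. ennreal (\<bar>g x\<bar> powr r) \<partial>lebesgue)"
    by (intro nn_integral_mono) (simp add: indicator_def)
  then show ?thesis
    using assms unfolding Lr_on_Xsp_def by auto
qed

definition tile_mass :: "real \<Rightarrow> (pt \<Rightarrow> real) \<Rightarrow> dpt \<Rightarrow> ennreal" where
  "tile_mass r g k = (\<integral>\<^sup>+x. ennreal (\<bar>g x\<bar> powr r) * indicator (tile_union {k}) x \<partial>lebesgue)"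

definition lr_mass :: "real \<Rightarrow> (dpt \<Rightarrow> real) \<Rightarrow> dpt set \<Rightarrow> ennreal" where
  "lr_mass r G A = (\<integral>\<^sup>+k. ennreal (\<bar>G k\<bar> powr r) \<partial>count_space A)"

lemma ennreal_abs_indicator_mult_powr:
  "ennreal (\<bar>indicator A x * (g x :: real)\<bar> powr r) = ennreal (\<bar>g x\<bar> powr r) * indicator A x"
  by (simp add: indicator_def)

lemma Lnorm_count_space_indicator:
  "Lnorm (count_space UNIV) r (\<lambda>k. indicator A k * G k) = epow (lr_mass r G A) (1 / r)"
  unfolding Lnorm_def lr_mass_def ennreal_abs_indicator_mult_powr
  by (simp add: nn_integral_count_space_indicator)

lemma lr_mass_mono: "A \<subseteq> B \<Longrightarrow> lr_mass r G A \<le> lr_mass r G B"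
  unfolding lr_mass_def by (rule nn_integral_count_space_mono_set)

lemma lr_mass_singleton: "lr_mass r G {k} = ennreal (\<bar>G k\<bar> powr r)"
  unfolding lr_mass_def by (simp add: nn_integral_count_space_finite)

lemma lr_mass_restrict: "(\<And>k. k \<notin> S \<Longrightarrow> G k = 0) \<Longrightarrow> lr_mass r G A = lr_mass r G (A \<inter> S)"
  unfolding lr_mass_def by (rule nn_integral_count_space_eq) auto

lemma Fdisc_eq_Lnorm: "Fdisc g r k = enn2real (Lnorm lebesgue r (\<lambda>x. indicator (tile_union {k}) x * g x))"
  unfolding Fdisc_def by (cases k) (simp add: tile_eq_tile_union)

lemma Fdisc_eq: "Fdisc g r k = enn2real (epow (tile_mass r g k) (1 / r))"
  unfolding Fdisc_eq_Lnorm tile_mass_def Lnorm_def ennreal_abs_indicator_mult_powr ..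

lemma ennreal_Fdisc_powr:
  assumes "Lr_on_Xsp r g" "0 < r"
  shows "ennreal (\<bar>Fdisc g r k\<bar> powr r) = tile_mass r g k"
proof -
  have "tile_mass r g k \<le> (\<integral>\<^sup>+x. ennreal (\<bar>g x\<bar> powr r) \<partial>lebesgue)"
    unfolding tile_mass_def by (intro nn_integral_mono) (simp add: indicator_def)
  then have "tile_mass r g k < \<infinity>"
    using assms(1) unfolding Lr_on_Xsp_def by auto
  then show ?thesis
    using ennreal_epow_inverse_powr[OF assms(2)] by (simp add: Fdisc_eq)
qed

lemma Fdisc_indicator_tile_union:
  assumes "0 < r"
  shows "Fdisc (\<lambda>x. indicator (tile_union S) x * g x) r = (\<lambda>k. indicator S k * Fdisc g r k)"
proof
  fix k
  show "Fdisc (\<lambda>x. indicator (tile_union S) x * g x) r k = indicator S k * Fdisc g r k"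
  proof (cases "k \<in> S")
    case True
    then have "(\<lambda>x. indicator (tile_union {k}) x * (indicator (tile_union S) x * g x))
        = (\<lambda>x. indicator (tile_union {k}) x * g x)"
      by (auto simp: indicator_def tile_union_def)
    then show ?thesis
      using True by (simp add: Fdisc_eq_Lnorm)
  next
    case False
    then have "(\<lambda>x. indicator (tile_union {k}) x * (indicator (tile_union S) x * g x)) = (\<lambda>x. 0)"
      by (auto simp: indicator_def tile_union_def)
    then show ?thesis
      using False assms by (simp add: Fdisc_eq_Lnorm Lnorm_def epow_zero)
  qed
qed

text \<open>Each point of \<open>Xsp\<close> lies in exactly one tile.\<close>

lemma nn_integral_tile_union:
  assumes g: "Lr_on_Xsp r g" and r: "0 < r"
  shows "(\<integral>\<^sup>+x. ennreal (\<bar>indicator (tile_union S) x * g x\<bar> powr r) \<partial>lebesgue) = lr_mass r (Fdisc g r) S"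
proof -
  have [measurable]: "g \<in> borel_measurable lebesgue"
    using g unfolding Lr_on_Xsp_def by auto
  let ?f = "\<lambda>k x. ennreal (\<bar>g x\<bar> powr r) * indicator (tile_union {k}) x"
  have "ennreal (\<bar>indicator (tile_union S) x * g x\<bar> powr r) = (\<integral>\<^sup>+k. ?f k x \<partial>count_space S)" for x
  proof (cases "x \<in> Xsp")
    case True
    have "(\<integral>\<^sup>+k. ?f k x \<partial>count_space S) = (\<Sum>k\<in>S \<inter> {tile_index x}. ?f k x)"
      by (rule nn_integral_count_space') (auto simp: tile_union_def)
    then show ?thesis
      using True by (auto simp: tile_union_def indicator_def)
  next
    case False
    then show ?thesis
      using g r unfolding Lr_on_Xsp_def by (simp add: tile_union_def)
  qed
  then have "(\<integral>\<^sup>+x. ennreal (\<bar>indicator (tile_union S) x * g x\<bar> powr r) \<partial>lebesgue)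
      = (\<integral>\<^sup>+x. (\<integral>\<^sup>+k. ?f k x \<partial>count_space S) \<partial>lebesgue)"
    by simp
  also have "\<dots> = (\<integral>\<^sup>+k. tile_mass r g k \<partial>count_space S)"
    unfolding tile_mass_def by (rule nn_integral_count_space_nn_integral) (auto intro: countableI_type)
  also have "\<dots> = lr_mass r (Fdisc g r) S"
    unfolding lr_mass_def ennreal_Fdisc_powr[OF g r] ..
  finally show ?thesis .
qed

lemma Lnorm_tile_union:
  "Lr_on_Xsp r g \<Longrightarrow> 0 < r \<Longrightarrow>
    Lnorm lebesgue r (\<lambda>x. indicator (tile_union S) x * g x) = epow (lr_mass r (Fdisc g r) S) (1 / r)"
  unfolding Lnorm_def by (simp add: nn_integral_tile_union)

lemma nu_eq_dnu: "B \<subseteq> Xsp \<Longrightarrow> nu B = dnu (tile_index ` B)"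
proof -
  have "(\<Union>(m, l, n)\<in>K. tree m l n) = tile_union (\<Union>(m, l, n)\<in>K. dtree m l n)" for K
    unfolding tree_eq_tile_union tile_union_def by auto
  then show "B \<subseteq> Xsp \<Longrightarrow> ?thesis"
    unfolding nu_def dnu_def by (simp add: subset_tile_union_iff)
qed

lemma mu_eq_dmu: "B \<subseteq> Xsp \<Longrightarrow> mu B = dmu (tile_index ` B)"
proof -
  have "(\<Union>(m, l)\<in>K. strip m l) = tile_union (\<Union>(m, l)\<in>K. dstrip m l)" for K
    unfolding strip_eq_tile_union tile_union_def by auto
  then show "B \<subseteq> Xsp \<Longrightarrow> ?thesis"
    unfolding mu_def dmu_def by (simp add: subset_tile_union_iff)
qed

lemma nu_tile_union: "nu (tile_union S) = dnu S"
  by (simp add: nu_eq_dnu tile_union_subset_Xsp tile_index_image_tile_union)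

lemma mu_tile_union: "mu (tile_union S) = dmu S"
  by (simp add: mu_eq_dmu tile_union_subset_Xsp tile_index_image_tile_union)

section \<open>Trees and the \<open>L\<^sup>q\<^sub>\<nu>(\<ell>\<^sup>r\<^sub>\<omega>)\<close> quasi-norms\<close>

definition tree_size :: "real \<Rightarrow> (dpt \<Rightarrow> real) \<Rightarrow> ennreal" where
  "tree_size r G = (SUP k. epow (ennreal (2 powi fst (snd k))) (- 1 / r) * epow (lr_mass r G (dtree_of k)) (1 / r))"

lemma dLinf_nu_altdef:
  "dLinf_nu r G = (SUP A\<in>{A. A \<noteq> {}}. epow (dnu A) (- 1 / r) * epow (lr_mass r G A) (1 / r))"
  unfolding dLinf_nu_def sup_size_def Lnorm_count_space_indicator ..

lemma tree_size_le_dLinf_nu: "tree_size r G \<le> dLinf_nu r G"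
  unfolding tree_size_def dLinf_nu_altdef
proof (rule SUP_least)
  fix k :: dpt
  have "dtree_of k \<noteq> {}"
    using mem_dtree_self by blast
  then show "epow (ennreal (2 powi fst (snd k))) (- 1 / r) * epow (lr_mass r G (dtree_of k)) (1 / r)
      \<le> (SUP A\<in>{A. A \<noteq> {}}. epow (dnu A) (- 1 / r) * epow (lr_mass r G A) (1 / r))"
    by (intro SUP_upper2[where i="dtree_of k"]) (simp_all add: dnu_dtree)
qed

lemma lr_mass_dtree_le_tree_size:
  "0 < r \<Longrightarrow> lr_mass r G (dtree m l n) \<le> epow (tree_size r G) r * ennreal (2 powi l)"
  by (rule epow_quotient_leD) (auto simp: tree_size_def intro!: SUP_upper2[where i="(m, l, n)"])

text \<open>Cover \<open>A\<close> by trees and add up the tree bounds.\<close>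

lemma lr_mass_le_tree_size_dnu:
  assumes r: "0 < r"
  shows "lr_mass r G A \<le> epow (tree_size r G) r * dnu A"
proof (cases "A = {}")
  case True
  then show ?thesis
    by (simp add: lr_mass_def nn_integral_count_space_finite)
next
  case False
  let ?c = "epow (tree_size r G) r"
  show ?thesis
  proof (cases "tree_size r G = top")
    case True
    then show ?thesis
      using dnu_pos[OF False] r by (simp add: epow_top ennreal_mult_eq_top_iff)
  next
    case fin: False
    show ?thesis
      unfolding dnu_eq_cover_measure
    proof (rule le_mult_cover_measure[OF epow_ne_top[OF r fin] UN_dtree_of])
      fix K
      assume "A \<subseteq> (\<Union>k\<in>K. dtree_of k)"
      then have "lr_mass r G A \<le> lr_mass r G (\<Union>k\<in>K. dtree_of k)"
        by (rule lr_mass_mono)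
      also have "\<dots> \<le> (\<integral>\<^sup>+k. lr_mass r G (dtree_of k) \<partial>count_space K)"
        unfolding lr_mass_def by (rule nn_integral_count_space_UN_le) (rule countableI_type)
      also have "\<dots> \<le> (\<integral>\<^sup>+k. ?c * ennreal (2 powi fst (snd k)) \<partial>count_space K)"
        by (intro nn_integral_mono lr_mass_dtree_le_tree_size[OF r])
      also have "\<dots> = ?c * (\<integral>\<^sup>+k. ennreal (2 powi fst (snd k)) \<partial>count_space K)"
        by (rule nn_integral_cmult) simp
      finally show "lr_mass r G A \<le> ?c * (\<integral>\<^sup>+k. ennreal (2 powi fst (snd k)) \<partial>count_space K)" .
    qed
  qed
qed

lemma dLinf_nu_eq_tree_size: "0 < r \<Longrightarrow> dLinf_nu r G = tree_size r G"
  unfolding dLinf_nu_altdef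
  by (intro antisym SUP_least epow_quotient_leI lr_mass_le_tree_size_dnu
      tree_size_le_dLinf_nu[unfolded dLinf_nu_altdef])

lemma Linf_nu_eq_dLinf_nu:
  assumes g: "Lr_on_Xsp r g" and r: "0 < r"
  shows "Linf_nu r g = dLinf_nu r (Fdisc g r)"
proof -
  have "Linf_nu r g = (SUP k. epow (nu (tile_union (dtree_of k))) (- 1 / r)
          * Lnorm lebesgue r (\<lambda>x. indicator (tile_union (dtree_of k)) x * g x))"
    unfolding Linf_nu_def sup_size_def Trees_def tree_eq_tile_union
    by (simp add: image_image case_prod_beta')
  also have "\<dots> = tree_size r (Fdisc g r)"
    unfolding tree_size_def nu_tile_union Lnorm_tile_union[OF g r] dnu_dtree ..
  finally show ?thesis
    using dLinf_nu_eq_tree_size[OF r] by simp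
qed

text \<open>Enlarging an exceptional set \<open>B \<subseteq> Xsp\<close> to the union of the tiles it meets changes
  neither its outer measure nor, by monotonicity, its admissibility; and every union of tiles
  is measurable.\<close>

lemma level_meas_eq_discrete:
  assumes measure_eq: "\<And>B. B \<subseteq> Xsp \<Longrightarrow> nuc B = nud (tile_index ` B)"
    and size_eq: "\<And>S. Lc (\<lambda>x. indicator (tile_union (- S)) x * g x) = Ld (\<lambda>k. indicator (- S) k * G k)"
    and mono: "abs_monotone Lc"
  shows "level_meas Xsp Bmeas nuc Lc g lam = level_meas UNIV UNIV nud Ld G lam"
  unfolding level_meas_def
proof (rule antisym)
  show "(INF B\<in>{B \<in> Bmeas. Lc (\<lambda>x. indicator (Xsp - B) x * g x) \<le> ennreal lam}. nuc B)
      \<le> (INF S\<in>{S \<in> UNIV. Ld (\<lambda>k. indicator (UNIV - S) k * G k) \<le> ennreal lam}. nud S)"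
  proof (rule INF_greatest)
    fix S
    assume "S \<in> {S \<in> UNIV. Ld (\<lambda>k. indicator (UNIV - S) k * G k) \<le> ennreal lam}"
    then have "tile_union S \<in> {B \<in> Bmeas. Lc (\<lambda>x. indicator (Xsp - B) x * g x) \<le> ennreal lam}"
      using size_eq[of S] unfolding Bmeas_def
      by (simp add: tile_union_subset_Xsp Xsp_diff_tile_union Compl_eq_Diff_UNIV)
    moreover have "nuc (tile_union S) = nud S"
      by (simp add: measure_eq tile_union_subset_Xsp tile_index_image_tile_union)
    ultimately show "(INF B\<in>{B \<in> Bmeas. Lc (\<lambda>x. indicator (Xsp - B) x * g x) \<le> ennreal lam}. nuc B)
        \<le> nud S"
      by (metis (no_types, lifting) INF_lower)
  qed
next
  show "(INF S\<in>{S \<in> UNIV. Ld (\<lambda>k. indicator (UNIV - S) k * G k) \<le> ennreal lam}. nud S)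
      \<le> (INF B\<in>{B \<in> Bmeas. Lc (\<lambda>x. indicator (Xsp - B) x * g x) \<le> ennreal lam}. nuc B)"
  proof (rule INF_greatest)
    fix B
    assume "B \<in> {B \<in> Bmeas. Lc (\<lambda>x. indicator (Xsp - B) x * g x) \<le> ennreal lam}"
    then have B: "B \<subseteq> Xsp" "Lc (\<lambda>x. indicator (Xsp - B) x * g x) \<le> ennreal lam"
      unfolding Bmeas_def by auto
    have "tile_union (- (tile_index ` B)) \<subseteq> Xsp - B"
      unfolding tile_union_def by auto
    then have "Ld (\<lambda>k. indicator (- (tile_index ` B)) k * G k) \<le> Lc (\<lambda>x. indicator (Xsp - B) x * g x)"
      unfolding size_eq[symmetric] by (intro abs_monotoneD[OF mono]) (auto simp: indicator_def)
    then have "tile_index ` B \<in> {S \<in> UNIV. Ld (\<lambda>k. indicator (UNIV - S) k * G k) \<le> ennreal lam}"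
      using B(2) by (simp add: Compl_eq_Diff_UNIV)
    then show "(INF S\<in>{S \<in> UNIV. Ld (\<lambda>k. indicator (UNIV - S) k * G k) \<le> ennreal lam}. nud S) \<le> nuc B"
      by (rule INF_lower2) (simp add: measure_eq[OF B(1)])
  qed
qed

lemma Lq_nu_eq_dLq_nu:
  assumes g: "Lr_on_Xsp r g" and r: "0 < r"
  shows "Lq_nu q r g = dLq_nu q r (Fdisc g r)"
proof -
  have "level_meas Xsp Bmeas nu (Linf_nu r) g lam
      = level_meas UNIV UNIV dnu (dLinf_nu r) (Fdisc g r) lam" for lam
  proof (rule level_meas_eq_discrete)
    show "abs_monotone (Linf_nu r)"
      by (rule abs_monotone_Linf_nu[OF r])
    show "nu B = dnu (tile_index ` B)" if "B \<subseteq> Xsp" for B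
      using that by (rule nu_eq_dnu)
    fix S
    have "Lr_on_Xsp r (\<lambda>x. indicator (tile_union (- S)) x * g x)"
      by (rule Lr_on_Xsp_indicator_mult[OF g tile_union_sets_lebesgue])
    then show "Linf_nu r (\<lambda>x. indicator (tile_union (- S)) x * g x)
        = dLinf_nu r (\<lambda>k. indicator (- S) k * Fdisc g r k)"
      by (simp add: Linf_nu_eq_dLinf_nu r Fdisc_indicator_tile_union)
  qed
  then show ?thesis
    unfolding Lq_nu_def dLq_nu_def by (metis ext)
qed

section \<open>Disjoint strips\<close>

lemma dstrip_nested:
  assumes "dstrip a1 l1 \<inter> dstrip a2 l2 \<noteq> {}" "l1 \<le> l2"
  shows "dstrip a1 l1 \<subseteq> dstrip a2 l2"
proof -
  obtain m' l' n' where "(m', l', n') \<in> dstrip a1 l1" "(m', l', n') \<in> dstrip a2 l2"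
    using assms(1) by auto
  then have "l' \<le> l1" "m' div 2 ^ nat (l1 - l') = a1" "m' div 2 ^ nat (l2 - l') = a2"
    unfolding dstrip_altdef by auto
  then have a2: "a2 = a1 div 2 ^ nat (l2 - l1)"
    using div_power2_chain[of l' l1 l2 m'] assms(2) by simp
  show ?thesis
  proof
    fix x
    assume "x \<in> dstrip a1 l1"
    then obtain m'' l'' n'' where "x = (m'', l'', n'')" "l'' \<le> l1" "m'' div 2 ^ nat (l1 - l'') = a1"
      unfolding dstrip_altdef by auto
    then show "x \<in> dstrip a2 l2"
      unfolding dstrip_altdef using div_power2_chain[of l'' l1 l2 m''] assms(2) a2 by auto
  qed
qed

lemma dstrip_subset_imp_scale_le: "dstrip a l \<subseteq> dstrip a' l' \<Longrightarrow> l \<le> l'"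
proof -
  assume "dstrip a l \<subseteq> dstrip a' l'"
  then have "(a, l, 0) \<in> dstrip a' l'"
    using mem_dstrip_self by blast
  then show ?thesis
    by (simp add: dstrip_altdef)
qed

lemma dstrip_subset_same_scale: "dstrip a l \<subseteq> dstrip a' l \<Longrightarrow> a' = a"
proof -
  assume "dstrip a l \<subseteq> dstrip a' l"
  then have "(a, l, 0) \<in> dstrip a' l"
    using mem_dstrip_self by blast
  then show ?thesis
    by (simp add: dstrip_altdef)
qed

lemma dtree_subset_dstrip:
  assumes "dtree m L n \<inter> dstrip a l \<noteq> {}" "L \<le> l"
  shows "dtree m L n \<subseteq> dstrip a l"
proof -
  obtain m' l' n' where "(m', l', n') \<in> dtree m L n" "(m', l', n') \<in> dstrip a l"
    using assms(1) by auto
  then have "l' \<le> L" "m' div 2 ^ nat (L - l') = m" "m' div 2 ^ nat (l - l') = a"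
    unfolding dstrip_altdef dtree_altdef by auto
  then have a: "a = m div 2 ^ nat (l - L)"
    using div_power2_chain[of l' L l m'] assms(2) by simp
  show ?thesis
  proof
    fix x
    assume "x \<in> dtree m L n"
    then obtain m'' l'' n'' where "x = (m'', l'', n'')" "l'' \<le> L" "m'' div 2 ^ nat (L - l'') = m"
      unfolding dtree_altdef by auto
    then show "x \<in> dstrip a l"
      unfolding dstrip_altdef using div_power2_chain[of l'' L l m''] assms(2) a by auto
  qed
qed

lemma dtree_inter_dstrip:
  assumes "dtree m L n \<inter> dstrip a l \<noteq> {}" "l < L"
  shows "dtree m L n \<inter> dstrip a l \<subseteq> dtree a l (n div 2 ^ nat (L - l))"
    and "a div 2 ^ nat (L - l) = m"
proof -
  obtain m' l' n' where "(m', l', n') \<in> dtree m L n" "(m', l', n') \<in> dstrip a l"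
    using assms(1) by auto
  then have "l' \<le> l" "m' div 2 ^ nat (L - l') = m" "m' div 2 ^ nat (l - l') = a"
    unfolding dstrip_altdef dtree_altdef by auto
  then show "a div 2 ^ nat (L - l) = m"
    using div_power2_chain[of l' l L m'] assms(2) by simp
  show "dtree m L n \<inter> dstrip a l \<subseteq> dtree a l (n div 2 ^ nat (L - l))"
  proof
    fix x
    assume "x \<in> dtree m L n \<inter> dstrip a l"
    then obtain m'' l'' n'' where x: "x = (m'', l'', n'')" "l'' \<le> l" "m'' div 2 ^ nat (l - l'') = a"
        "n'' = n div 2 ^ nat (L - l'')"
      unfolding dtree_altdef dstrip_altdef by auto
    have "n div 2 ^ nat (L - l'') = n div 2 ^ nat (L - l) div 2 ^ nat (l - l'')"
      using div_power2_chain[of l'' l L n] x(2) assms(2)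
      by (simp add: div_power2_div_power2 add.commute)
    then show "x \<in> dtree a l (n div 2 ^ nat (L - l))"
      unfolding dtree_altdef using x by auto
  qed
qed

lemma dyI_disjoint_if_dstrip_disjoint:
  assumes "dstrip a1 l1 \<inter> dstrip a2 l2 = {}"
  shows "dyI a1 l1 \<inter> dyI a2 l2 = {}"
proof (rule ccontr)
  assume "dyI a1 l1 \<inter> dyI a2 l2 \<noteq> {}"
  then obtain x where "x \<in> dyI a1 l1" "x \<in> dyI a2 l2"
    by blast
  then have x: "dyadic_index l1 x = a1" "dyadic_index l2 x = a2"
    by (simp_all add: mem_dyI_iff)
  have "(a1, l1, 0) \<in> dstrip a2 l2 \<or> (a2, l2, 0) \<in> dstrip a1 l1"
  proof (cases "l1 \<le> l2")
    case True
    then show ?thesis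
      using x dyadic_index_coarsen[OF True, of x] by (simp add: dstrip_altdef)
  next
    case False
    then show ?thesis
      using x dyadic_index_coarsen[of l2 l1 x] by (simp add: dstrip_altdef)
  qed
  then show False
    using assms mem_dstrip_self[of a1 l1 0] mem_dstrip_self[of a2 l2 0] by blast
qed

lemma emeasure_dyI: "emeasure lborel (dyI a l) = ennreal (2 powi l)"
proof -
  have "emeasure lborel (dyI a l) = ennreal (2 powi l * (of_int a + 1) - 2 powi l * of_int a)"
    unfolding dyI_def by (rule emeasure_lborel_Ioc) simp
  then show ?thesis
    by (simp add: algebra_simps)
qed

lemma sum_two_powi_disjoint_dyI_le:
  fixes M :: "(int \<times> int) set"
  assumes "\<And>k. k \<in> M \<Longrightarrow> dyI (fst k) (snd k) \<subseteq> dyI m L"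
    and "disjoint_family_on (\<lambda>k. dyI (fst k) (snd k)) M"
  shows "(\<integral>\<^sup>+k. ennreal (2 powi snd k) \<partial>count_space M) \<le> ennreal (2 powi L)"
proof -
  have "(\<integral>\<^sup>+k. ennreal (2 powi snd k) \<partial>count_space M)
      = (\<integral>\<^sup>+k. emeasure lborel (dyI (fst k) (snd k)) \<partial>count_space M)"
    by (simp add: emeasure_dyI)
  also have "\<dots> = emeasure lborel (\<Union>k\<in>M. dyI (fst k) (snd k))"
    using assms(2) by (intro emeasure_UN_countable[symmetric]) (auto simp: dyI_def intro: countableI_type)
  also have "\<dots> \<le> emeasure lborel (dyI m L)"
    using assms(1) by (intro emeasure_mono) (auto simp: dyI_def)
  finally show ?thesis
    by (simp add: emeasure_dyI)
qed

definition maximal_strips :: "(int \<times> int) set \<Rightarrow> (int \<times> int) set" where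
  "maximal_strips K = {k \<in> K. \<forall>k'\<in>K. dstrip_of k \<subseteq> dstrip_of k' \<longrightarrow> k' = k}"

lemma maximal_strips_subset: "maximal_strips K \<subseteq> K"
  unfolding maximal_strips_def by auto

lemma disjoint_maximal_strips: "disjoint_family_on dstrip_of (maximal_strips K)"
  unfolding disjoint_family_on_def
proof (intro ballI impI)
  fix k k'
  assume k: "k \<in> maximal_strips K" "k' \<in> maximal_strips K" "k \<noteq> k'"
  show "dstrip_of k \<inter> dstrip_of k' = {}"
  proof (rule ccontr)
    assume ne: "dstrip_of k \<inter> dstrip_of k' \<noteq> {}"
    have "dstrip_of k \<subseteq> dstrip_of k' \<or> dstrip_of k' \<subseteq> dstrip_of k"
    proof (cases "snd k \<le> snd k'")
      case True
      then show ?thesis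
        using dstrip_nested[OF ne] by simp
    next
      case False
      then show ?thesis
        using dstrip_nested[of "fst k'" "snd k'" "fst k" "snd k"] ne by (simp add: Int_commute)
    qed
    then show False
      using k unfolding maximal_strips_def by auto
  qed
qed

lemma scales_bounded_if_cost_finite:
  assumes "(\<integral>\<^sup>+k. ennreal (2 powi snd k) \<partial>count_space K) \<noteq> top"
  obtains L where "\<And>k. k \<in> K \<Longrightarrow> snd k \<le> L"
proof -
  obtain C where C: "(\<integral>\<^sup>+k. ennreal (2 powi snd k) \<partial>count_space K) = ennreal C" "0 \<le> C"
    using assms by (cases "\<integral>\<^sup>+k. ennreal (2 powi snd k) \<partial>count_space K") auto
  have "snd k \<le> \<lfloor>C\<rfloor>" if "k \<in> K" for k
  proof -
    have "ennreal (2 powi snd k) \<le> ennreal C"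
      using nn_integral_ge_point[OF that, of "\<lambda>k. ennreal (2 powi snd k)"] C by simp
    then have "2 powi snd k \<le> C"
      using C(2) by simp
    then show ?thesis
      using of_int_less_two_powi[of "snd k"] by linarith
  qed
  then show ?thesis
    using that by blast
qed

text \<open>Among the strips of the cover containing a given one, a strip of largest scale is
  maximal.\<close>

lemma UN_maximal_strips:
  assumes "(\<integral>\<^sup>+k. ennreal (2 powi snd k) \<partial>count_space K) \<noteq> top"
  shows "(\<Union>k\<in>K. dstrip_of k) \<subseteq> (\<Union>k\<in>maximal_strips K. dstrip_of k)"
proof -
  obtain L where L: "\<And>k. k \<in> K \<Longrightarrow> snd k \<le> L"
    using scales_bounded_if_cost_finite[OF assms] by blast
  have "\<exists>k'\<in>maximal_strips K. dstrip_of k \<subseteq> dstrip_of k'" if "k \<in> K" for k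
  proof -
    define Up where "Up = {k' \<in> K. dstrip_of k \<subseteq> dstrip_of k'}"
    have "snd ` Up \<subseteq> {snd k..L}"
      unfolding Up_def using L dstrip_subset_imp_scale_le by fastforce
    then have fin: "finite (snd ` Up)"
      by (rule finite_subset) simp
    have "k \<in> Up"
      unfolding Up_def using that by simp
    then have "Max (snd ` Up) \<in> snd ` Up"
      using fin by (intro Max_in) auto
    then obtain ks where ks: "ks \<in> Up" "snd ks = Max (snd ` Up)"
      by auto
    have "ks \<in> maximal_strips K"
      unfolding maximal_strips_def
    proof (intro CollectI conjI ballI impI)
      show "ks \<in> K"
        using ks Up_def by simp
      fix k'
      assume k': "k' \<in> K" "dstrip_of ks \<subseteq> dstrip_of k'"
      then have "k' \<in> Up"
        using ks unfolding Up_def by auto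
      then have "snd k' \<le> snd ks"
        using ks fin by simp
      then have "snd k' = snd ks"
        using dstrip_subset_imp_scale_le[OF k'(2)] by simp
      then show "k' = ks"
        using dstrip_subset_same_scale[of "fst ks" "snd ks" "fst k'"] k'(2) by (simp add: prod_eq_iff)
    qed
    moreover have "dstrip_of k \<subseteq> dstrip_of ks"
      using ks(1) unfolding Up_def by simp
    ultimately show ?thesis
      by blast
  qed
  then show ?thesis
    by blast
qed

lemma lr_mass_le_sum_restrict:
  assumes "countable I" "\<And>x. x \<in> A \<Longrightarrow> G x \<noteq> 0 \<Longrightarrow> \<exists>i\<in>I. x \<in> S i"
  shows "lr_mass r G A \<le> (\<integral>\<^sup>+i. lr_mass r (\<lambda>x. indicator (S i) x * G x) A \<partial>count_space I)"
  unfolding lr_mass_def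
proof (rule nn_integral_count_space_le_sum[OF assms(1)])
  fix x
  assume x: "x \<in> A"
  show "ennreal (\<bar>G x\<bar> powr r) \<le> (\<integral>\<^sup>+i. ennreal (\<bar>indicator (S i) x * G x\<bar> powr r) \<partial>count_space I)"
  proof (cases "G x = 0")
    case False
    then obtain i where "i \<in> I" "x \<in> S i"
      using assms(2)[OF x] by blast
    then show ?thesis
      using nn_integral_ge_point[of i I "\<lambda>i. ennreal (\<bar>indicator (S i) x * G x\<bar> powr r)"] by simp
  qed simp
qed

lemma lr_mass_dtree_inter_dstrip_le:
  assumes "dtree m L n \<inter> dstrip a l \<noteq> {}" "l < L"
  shows "lr_mass r (\<lambda>x. indicator (dstrip a l) x * G x) (dtree m L n)
    \<le> lr_mass r (\<lambda>x. indicator (dstrip a l) x * G x) (dtree a l (n div 2 ^ nat (L - l)))"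
proof -
  have "lr_mass r (\<lambda>x. indicator (dstrip a l) x * G x) (dtree m L n)
      = lr_mass r (\<lambda>x. indicator (dstrip a l) x * G x) (dtree m L n \<inter> dstrip a l)"
    by (rule lr_mass_restrict) simp
  also have "\<dots> \<le> lr_mass r (\<lambda>x. indicator (dstrip a l) x * G x) (dtree a l (n div 2 ^ nat (L - l)))"
    using dtree_inter_dstrip(1)[OF assms] by (rule lr_mass_mono)
  finally show ?thesis .
qed

text \<open>The strips meet the tree in subtrees whose bases are disjoint dyadic subintervals of
  the base of the tree.\<close>

lemma sum_two_powi_dstrips_meeting_dtree_le:
  assumes disj: "disjoint_family_on dstrip_of M"
    and meet: "\<And>k. k \<in> M \<Longrightarrow> dtree m L n \<inter> dstrip_of k \<noteq> {}"
    and below: "\<And>k. k \<in> M \<Longrightarrow> snd k < L"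
  shows "(\<integral>\<^sup>+k. ennreal (2 powi snd k) \<partial>count_space M) \<le> ennreal (2 powi L)"
proof (rule sum_two_powi_disjoint_dyI_le)
  fix k
  assume k: "k \<in> M"
  have "fst k div 2 ^ nat (L - snd k) = m"
    using dtree_inter_dstrip(2)[OF meet[OF k] below[OF k]] .
  then show "dyI (fst k) (snd k) \<subseteq> dyI m L"
    using dyI_subset_iff[of "snd k" L "fst k" m] below[OF k] by simp
next
  show "disjoint_family_on (\<lambda>k. dyI (fst k) (snd k)) M"
    unfolding disjoint_family_on_def
  proof (intro ballI impI)
    fix k k'
    assume "k \<in> M" "k' \<in> M" "k \<noteq> k'"
    then have "dstrip_of k \<inter> dstrip_of k' = {}"
      using disjoint_family_onD[OF disj] by blast
    then show "dyI (fst k) (snd k) \<inter> dyI (fst k') (snd k') = {}"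
      by (rule dyI_disjoint_if_dstrip_disjoint)
  qed
qed

text \<open>A tree either lies in one strip of the family, or it only meets strips of smaller
  scale.\<close>

lemma lr_mass_dtree_le_disjoint_strips:
  assumes disj: "disjoint_family_on dstrip_of K"
    and supp: "\<And>x. G x \<noteq> 0 \<Longrightarrow> \<exists>k\<in>K. x \<in> dstrip_of k"
    and bound: "\<And>k m l n. k \<in> K \<Longrightarrow>
      lr_mass r (\<lambda>x. indicator (dstrip_of k) x * G x) (dtree m l n) \<le> c * ennreal (2 powi l)"
  shows "lr_mass r G (dtree m L n) \<le> c * ennreal (2 powi L)"
proof (cases "\<exists>k\<in>K. L \<le> snd k \<and> dtree m L n \<inter> dstrip_of k \<noteq> {}")
  case True
  then obtain k where k: "k \<in> K" "L \<le> snd k" "dtree m L n \<inter> dstrip_of k \<noteq> {}"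
    by blast
  then have "dtree m L n \<subseteq> dstrip_of k"
    using dtree_subset_dstrip by blast
  then have "lr_mass r G (dtree m L n) = lr_mass r (\<lambda>x. indicator (dstrip_of k) x * G x) (dtree m L n)"
    unfolding lr_mass_def by (intro nn_integral_cong) (auto simp: indicator_def)
  also have "\<dots> \<le> c * ennreal (2 powi L)"
    by (rule bound[OF k(1)])
  finally show ?thesis .
next
  case False
  define M where "M = {k \<in> K. dtree m L n \<inter> dstrip_of k \<noteq> {}}"
  have M: "k \<in> K" "dtree m L n \<inter> dstrip_of k \<noteq> {}" "snd k < L" if "k \<in> M" for k
    using that False unfolding M_def by auto
  have "lr_mass r G (dtree m L n)
      \<le> (\<integral>\<^sup>+k. lr_mass r (\<lambda>x. indicator (dstrip_of k) x * G x) (dtree m L n) \<partial>count_space M)"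
  proof (rule lr_mass_le_sum_restrict[OF countableI_type])
    fix x
    assume x: "x \<in> dtree m L n" "G x \<noteq> 0"
    then obtain k where "k \<in> K" "x \<in> dstrip_of k"
      using supp by blast
    then show "\<exists>k\<in>M. x \<in> dstrip_of k"
      using x(1) unfolding M_def by blast
  qed
  also have "\<dots> \<le> (\<integral>\<^sup>+k. c * ennreal (2 powi snd k) \<partial>count_space M)"
  proof (intro nn_integral_mono_AE, unfold AE_count_space, intro ballI)
    fix k
    assume k: "k \<in> M"
    show "lr_mass r (\<lambda>x. indicator (dstrip_of k) x * G x) (dtree m L n) \<le> c * ennreal (2 powi snd k)"
      using lr_mass_dtree_inter_dstrip_le[OF M(2,3)[OF k]] bound[OF M(1)[OF k]] by (rule order_trans)
  qed
  also have "\<dots> = c * (\<integral>\<^sup>+k. ennreal (2 powi snd k) \<partial>count_space M)"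
    by (rule nn_integral_cmult) simp
  also have "\<dots> \<le> c * ennreal (2 powi L)"
  proof (intro mult_left_mono sum_two_powi_dstrips_meeting_dtree_le[where m=m and n=n])
    have "M \<subseteq> K"
      unfolding M_def by blast
    then show "disjoint_family_on dstrip_of M"
      using disj by (rule disjoint_family_on_mono)
  qed (simp_all add: M)
  finally show ?thesis .
qed

lemma dLinf_nu_le_disjoint_strips:
  assumes r: "0 < r" and disj: "disjoint_family_on dstrip_of K"
    and supp: "\<And>x. G x \<noteq> 0 \<Longrightarrow> \<exists>k\<in>K. x \<in> dstrip_of k"
    and bound: "\<And>k. k \<in> K \<Longrightarrow> dLinf_nu r (\<lambda>x. indicator (dstrip_of k) x * G x) \<le> t"
  shows "dLinf_nu r G \<le> t"
proof -
  have "lr_mass r G (dtree m L n) \<le> epow t r * ennreal (2 powi L)" for m L n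
  proof (rule lr_mass_dtree_le_disjoint_strips[OF disj supp])
    fix k m l n
    assume k: "k \<in> K"
    let ?Gk = "\<lambda>x. indicator (dstrip_of k) x * G x"
    have "lr_mass r ?Gk (dtree m l n) \<le> epow (tree_size r ?Gk) r * ennreal (2 powi l)"
      by (rule lr_mass_dtree_le_tree_size[OF r])
    also have "\<dots> \<le> epow t r * ennreal (2 powi l)"
      using bound[OF k] dLinf_nu_eq_tree_size[OF r, of ?Gk] by (intro mult_right_mono epow_mono r) auto
    finally show "lr_mass r ?Gk (dtree m l n) \<le> epow t r * ennreal (2 powi l)" .
  qed
  then have "tree_size r G \<le> t"
    unfolding tree_size_def by (intro SUP_least epow_quotient_leI[OF r]) auto
  then show ?thesis
    using dLinf_nu_eq_tree_size[OF r] by simp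
qed

lemma dLinf_nu_glue_exceptional_sets:
  assumes r: "0 < r" and disj: "disjoint_family_on dstrip_of K"
    and admissible: "\<And>k. k \<in> K \<Longrightarrow>
      dLinf_nu r (\<lambda>x. indicator (UNIV - B k) x * (indicator (dstrip_of k) x * H x)) \<le> t"
  shows "dLinf_nu r (\<lambda>x. indicator (UNIV - (\<Union>k\<in>K. B k)) x * (indicator (\<Union>k\<in>K. dstrip_of k) x * H x))
    \<le> t"
proof (rule dLinf_nu_le_disjoint_strips[OF r disj])
  fix k
  assume k: "k \<in> K"
  have "dLinf_nu r (\<lambda>x. indicator (dstrip_of k) x
        * (indicator (UNIV - (\<Union>k\<in>K. B k)) x * (indicator (\<Union>k\<in>K. dstrip_of k) x * H x)))
      \<le> dLinf_nu r (\<lambda>x. indicator (UNIV - B k) x * (indicator (dstrip_of k) x * H x))"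
    using k by (intro abs_monotoneD[OF abs_monotone_dLinf_nu[OF r]]) (auto simp: indicator_def)
  also have "\<dots> \<le> t"
    by (rule admissible[OF k])
  finally show "dLinf_nu r (\<lambda>x. indicator (dstrip_of k) x
      * (indicator (UNIV - (\<Union>k\<in>K. B k)) x * (indicator (\<Union>k\<in>K. dstrip_of k) x * H x))) \<le> t" .
qed (auto simp: indicator_def split: if_splits)

definition dnu_level :: "real \<Rightarrow> (dpt \<Rightarrow> real) \<Rightarrow> real \<Rightarrow> ennreal" where
  "dnu_level r H = level_meas UNIV UNIV dnu (dLinf_nu r) H"

definition dLq_nu_power :: "real \<Rightarrow> real \<Rightarrow> (dpt \<Rightarrow> real) \<Rightarrow> ennreal" where
  "dLq_nu_power q r H = (\<integral>\<^sup>+t. ennreal (q * t powr (q - 1)) * dnu_level r H t * indicator {0<..} t \<partial>lborel)"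

lemma dLq_nu_eq_epow: "dLq_nu q r H = epow (dLq_nu_power q r H) (1 / q)"
  unfolding dLq_nu_def Lq_of_dist_def dLq_nu_power_def dnu_level_def ..

lemma borel_measurable_dnu_level [measurable]: "dnu_level r H \<in> borel_measurable lborel"
  using borel_measurable_antimono_ennreal[of "dnu_level r H"]
  unfolding dnu_level_def by (simp add: level_meas_antimono)

lemma dLq_nu_power_mono:
  "0 < r \<Longrightarrow> (\<And>x. \<bar>H x\<bar> \<le> \<bar>H' x\<bar>) \<Longrightarrow> dLq_nu_power q r H \<le> dLq_nu_power q r H'"
  unfolding dLq_nu_power_def dnu_level_def
  by (intro nn_integral_mono mult_right_mono mult_left_mono level_meas_mono abs_monotone_dLinf_nu) auto

lemma dLinf_nu_zero: "0 < r \<Longrightarrow> dLinf_nu r (\<lambda>_. 0) = 0"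
  unfolding dLinf_nu_altdef lr_mass_def by (simp add: epow_zero) (intro antisym SUP_least; simp)

lemma dLq_nu_power_zero:
  assumes "0 < r"
  shows "dLq_nu_power q r (\<lambda>_. 0) = 0"
proof -
  have "dnu_level r (\<lambda>_. 0) t \<le> dnu {}" for t
    unfolding dnu_level_def level_meas_def by (rule INF_lower) (simp add: dLinf_nu_zero[OF assms])
  then show ?thesis
    unfolding dLq_nu_power_def by (simp add: dnu_empty)
qed

lemma dnu_level_disjoint_strips_le:
  assumes r: "0 < r" and disj: "disjoint_family_on dstrip_of K"
  shows "dnu_level r (\<lambda>x. indicator (\<Union>k\<in>K. dstrip_of k) x * H x) t
      \<le> (\<integral>\<^sup>+k. dnu_level r (\<lambda>x. indicator (dstrip_of k) x * H x) t \<partial>count_space K)"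
proof (rule ennreal_le_epsilon)
  fix e :: real
  assume fin: "(\<integral>\<^sup>+k. dnu_level r (\<lambda>x. indicator (dstrip_of k) x * H x) t \<partial>count_space K) < top"
    and e: "0 < e"
  define P where "P k B \<longleftrightarrow>
    dLinf_nu r (\<lambda>x. indicator (UNIV - B) x * (indicator (dstrip_of k) x * H x)) \<le> ennreal t" for k B
  have level: "dnu_level r (\<lambda>x. indicator (dstrip_of k) x * H x) t = (INF B\<in>{B. P k B}. dnu B)" for k
    unfolding dnu_level_def level_meas_def P_def by simp
  have ex: "\<exists>B. P k B" for k
    by (rule exI[of _ UNIV]) (simp add: P_def dLinf_nu_zero[OF r])
  have fin': "(\<integral>\<^sup>+k. (INF B\<in>{B. P k B}. dnu B) \<partial>count_space K) < top"
    using fin unfolding level .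
  obtain B where B: "\<And>k. k \<in> K \<Longrightarrow> P k (B k)"
    and cost: "(\<integral>\<^sup>+k. dnu (B k) \<partial>count_space K)
      \<le> (\<integral>\<^sup>+k. (INF B\<in>{B. P k B}. dnu B) \<partial>count_space K) + ennreal e"
    by (rule obtain_near_INF_family[OF countableI_type ex e fin']) auto
  have "dLinf_nu r (\<lambda>x. indicator (UNIV - (\<Union>k\<in>K. B k)) x * (indicator (\<Union>k\<in>K. dstrip_of k) x * H x))
      \<le> ennreal t"
    using B unfolding P_def by (rule dLinf_nu_glue_exceptional_sets[OF r disj])
  then have "dnu_level r (\<lambda>x. indicator (\<Union>k\<in>K. dstrip_of k) x * H x) t \<le> dnu (\<Union>k\<in>K. B k)"
    unfolding dnu_level_def level_meas_def by (intro INF_lower) simp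
  also have "\<dots> \<le> (\<integral>\<^sup>+k. dnu (B k) \<partial>count_space K)"
    by (rule dnu_countable_subadditive) (rule countableI_type)
  finally show "dnu_level r (\<lambda>x. indicator (\<Union>k\<in>K. dstrip_of k) x * H x) t
      \<le> (\<integral>\<^sup>+k. dnu_level r (\<lambda>x. indicator (dstrip_of k) x * H x) t \<partial>count_space K) + ennreal e"
    using cost unfolding level by (rule order_trans)
qed

lemma dLq_nu_power_disjoint_strips_le:
  assumes "0 < r" "disjoint_family_on dstrip_of K"
  shows "dLq_nu_power q r (\<lambda>x. indicator (\<Union>k\<in>K. dstrip_of k) x * H x)
      \<le> (\<integral>\<^sup>+k. dLq_nu_power q r (\<lambda>x. indicator (dstrip_of k) x * H x) \<partial>count_space K)"
proof -
  let ?w = "\<lambda>t. ennreal (q * t powr (q - 1)) * indicator {0<..} t"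
  let ?L = "\<lambda>k t. dnu_level r (\<lambda>x. indicator (dstrip_of k) x * H x) t"
  have "dLq_nu_power q r (\<lambda>x. indicator (\<Union>k\<in>K. dstrip_of k) x * H x)
      \<le> (\<integral>\<^sup>+t. ?w t * (\<integral>\<^sup>+k. ?L k t \<partial>count_space K) \<partial>lborel)"
    unfolding dLq_nu_power_def
  proof (intro nn_integral_mono)
    fix t
    have "ennreal (q * t powr (q - 1)) * dnu_level r (\<lambda>x. indicator (\<Union>k\<in>K. dstrip_of k) x * H x) t
        * indicator {0<..} t = ?w t * dnu_level r (\<lambda>x. indicator (\<Union>k\<in>K. dstrip_of k) x * H x) t"
      by (simp only: mult_ac)
    also have "\<dots> \<le> ?w t * (\<integral>\<^sup>+k. ?L k t \<partial>count_space K)"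
      by (rule mult_left_mono[OF dnu_level_disjoint_strips_le[OF assms]]) simp
    finally show "ennreal (q * t powr (q - 1))
        * dnu_level r (\<lambda>x. indicator (\<Union>k\<in>K. dstrip_of k) x * H x) t * indicator {0<..} t
        \<le> ?w t * (\<integral>\<^sup>+k. ?L k t \<partial>count_space K)" .
  qed
  also have "\<dots> = (\<integral>\<^sup>+t. (\<integral>\<^sup>+k. ?w t * ?L k t \<partial>count_space K) \<partial>lborel)"
    by (intro nn_integral_cong nn_integral_cmult[symmetric]) simp
  also have "\<dots> = (\<integral>\<^sup>+k. (\<integral>\<^sup>+t. ?w t * ?L k t \<partial>lborel) \<partial>count_space K)"
    by (rule nn_integral_count_space_nn_integral) (auto intro: countableI_type)
  also have "\<dots> = (\<integral>\<^sup>+k. dLq_nu_power q r (\<lambda>x. indicator (dstrip_of k) x * H x) \<partial>count_space K)"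
    unfolding dLq_nu_power_def by (intro nn_integral_cong) (simp only: mult_ac)
  finally show ?thesis .
qed

lemma two_powi_le_dnu_level:
  assumes r: "0 < r" and t: "0 < t" and small: "t powr r * 2 powi l < \<bar>H (m, l, n)\<bar> powr r"
  shows "ennreal (2 powi l) \<le> dnu_level r H t"
  unfolding dnu_level_def level_meas_def
proof (rule INF_greatest)
  fix B
  assume "B \<in> {B \<in> UNIV. dLinf_nu r (\<lambda>x. indicator (UNIV - B) x * H x) \<le> ennreal t}"
  then have admissible: "dLinf_nu r (\<lambda>x. indicator (UNIV - B) x * H x) \<le> ennreal t"
    by simp
  show "ennreal (2 powi l) \<le> dnu B"
  proof (cases "(m, l, n) \<in> B")
    case True
    then show ?thesis
      by (rule two_powi_le_dnu)
  next
    case False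
    let ?H = "\<lambda>x. indicator (UNIV - B) x * H x"
    have "epow (dnu {(m, l, n)}) (- 1 / r) * epow (lr_mass r ?H {(m, l, n)}) (1 / r) \<le> dLinf_nu r ?H"
      unfolding dLinf_nu_altdef by (rule SUP_upper) simp
    also have "\<dots> \<le> ennreal t"
      by (rule admissible)
    finally have "lr_mass r ?H {(m, l, n)} \<le> epow (ennreal t) r * dnu {(m, l, n)}"
      by (intro epow_quotient_leD[OF r]) (simp_all add: dnu_singleton)
    then have "\<bar>H (m, l, n)\<bar> powr r \<le> t powr r * 2 powi l"
      using False t by (simp add: lr_mass_singleton dnu_singleton epow_ennreal ennreal_mult'[symmetric])
    then show ?thesis
      using small by simp
  qed
qed

lemma nn_integral_lborel_ne_0:
  fixes f :: "real \<Rightarrow> ennreal"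
  assumes [measurable]: "f \<in> borel_measurable lborel" and "a < b" and pos: "\<And>t. a < t \<Longrightarrow> t < b \<Longrightarrow> 0 < f t"
  shows "(\<integral>\<^sup>+t. f t \<partial>lborel) \<noteq> 0"
proof
  assume "(\<integral>\<^sup>+t. f t \<partial>lborel) = 0"
  then have "AE t in lborel. f t = 0"
    by (simp add: nn_integral_0_iff_AE)
  then have "AE t in lborel. t \<notin> {a<..<b}"
    by eventually_elim (use pos in force)
  then have "emeasure lborel {a<..<b} = 0"
    by (subst (asm) AE_iff_measurable[of "{a<..<b}"]) auto
  then show False
    using \<open>a < b\<close> by simp
qed

lemma dLq_nu_eq_0_imp:
  assumes q: "0 < q" and r: "0 < r" and zero: "dLq_nu q r H = 0"
  shows "H k = 0"
proof (rule ccontr)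
  assume Hk: "H k \<noteq> 0"
  obtain m l n where k: "k = (m, l, n)"
    by (cases k)
  define tau where "tau = (\<bar>H k\<bar> powr r / 2 powi l) powr (1 / r)"
  have tau: "0 < tau"
    unfolding tau_def using Hk by simp
  have "0 < ennreal (q * t powr (q - 1)) * dnu_level r H t * indicator {0<..} t"
    if t: "0 < t" "t < tau" for t
  proof -
    have "t powr r < tau powr r"
      using t r by (simp add: powr_less_mono2)
    also have "tau powr r = \<bar>H k\<bar> powr r / 2 powi l"
      unfolding tau_def using Hk r by (simp add: powr_powr)
    finally have "t powr r * 2 powi l < \<bar>H (m, l, n)\<bar> powr r"
      by (simp add: k field_simps)
    then have "ennreal (2 powi l) \<le> dnu_level r H t"
      by (rule two_powi_le_dnu_level[OF r t(1)])
    then have "0 < dnu_level r H t"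
      by (rule less_le_trans[rotated]) simp
    then show ?thesis
      using t q by (simp add: ennreal_zero_less_mult_iff)
  qed
  then have "dLq_nu_power q r H \<noteq> 0"
    unfolding dLq_nu_power_def by (intro nn_integral_lborel_ne_0[OF _ tau]) auto
  then show False
    using zero q by (simp add: dLq_nu_eq_epow epow_eq_0_iff)
qed

section \<open>Strips and the \<open>L\<^sup>p\<^sub>\<mu>(\<ell>\<^sup>q\<^sub>\<nu>(\<ell>\<^sup>r\<^sub>\<omega>))\<close> quasi-norms\<close>

definition strip_size :: "real \<Rightarrow> real \<Rightarrow> (dpt \<Rightarrow> real) \<Rightarrow> ennreal" where
  "strip_size q r G =
    (SUP k. epow (ennreal (2 powi snd k)) (- 1 / q) * dLq_nu q r (\<lambda>x. indicator (dstrip_of k) x * G x))"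

lemma dLq_nu_power_dstrip_le_strip_size:
  "0 < q \<Longrightarrow> dLq_nu_power q r (\<lambda>x. indicator (dstrip_of k) x * G x)
    \<le> epow (strip_size q r G) q * ennreal (2 powi snd k)"
  by (rule epow_quotient_leD)
    (auto simp: strip_size_def dLq_nu_eq_epow[symmetric] intro!: SUP_upper2[where i=k])

lemma strip_size_eq_0_imp:
  assumes q: "0 < q" and r: "0 < r" and zero: "strip_size q r G = 0"
  shows "G k = 0"
proof -
  obtain m l n where k: "k = (m, l, n)"
    by (cases k)
  have "epow (ennreal (2 powi l)) (- 1 / q) * dLq_nu q r (\<lambda>x. indicator (dstrip m l) x * G x)
      \<le> strip_size q r G"
    unfolding strip_size_def by (rule SUP_upper2[of "(m, l)"]) auto
  moreover have "epow (ennreal (2 powi l)) (- 1 / q) \<noteq> 0"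
    by (simp add: epow_ennreal)
  ultimately have "dLq_nu q r (\<lambda>x. indicator (dstrip m l) x * G x) = 0"
    using zero by simp
  then have "indicator (dstrip m l) k * G k = 0"
    by (rule dLq_nu_eq_0_imp[OF q r])
  then show ?thesis
    by (simp add: k mem_dstrip_self)
qed

text \<open>Replace the strips of the cover by its maximal strips, which are disjoint.\<close>

lemma dLq_nu_power_le_strip_cover_cost:
  assumes q: "0 < q" and r: "0 < r" and cover: "A \<subseteq> (\<Union>k\<in>K. dstrip_of k)"
    and finite: "(\<integral>\<^sup>+k. ennreal (2 powi snd k) \<partial>count_space K) \<noteq> top"
  shows "dLq_nu_power q r (\<lambda>x. indicator A x * G x)
    \<le> epow (strip_size q r G) q * (\<integral>\<^sup>+k. ennreal (2 powi snd k) \<partial>count_space K)"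
proof -
  let ?c = "epow (strip_size q r G) q"
  let ?K = "maximal_strips K"
  have "dLq_nu_power q r (\<lambda>x. indicator A x * G x)
      \<le> dLq_nu_power q r (\<lambda>x. indicator (\<Union>k\<in>?K. dstrip_of k) x * G x)"
    using cover UN_maximal_strips[OF finite] by (intro dLq_nu_power_mono[OF r]) (auto simp: indicator_def)
  also have "\<dots> \<le> (\<integral>\<^sup>+k. dLq_nu_power q r (\<lambda>x. indicator (dstrip_of k) x * G x) \<partial>count_space ?K)"
    by (rule dLq_nu_power_disjoint_strips_le[OF r disjoint_maximal_strips])
  also have "\<dots> \<le> (\<integral>\<^sup>+k. ?c * ennreal (2 powi snd k) \<partial>count_space ?K)"
    by (intro nn_integral_mono dLq_nu_power_dstrip_le_strip_size[OF q])
  also have "\<dots> = ?c * (\<integral>\<^sup>+k. ennreal (2 powi snd k) \<partial>count_space ?K)"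
    by (rule nn_integral_cmult) simp
  also have "\<dots> \<le> ?c * (\<integral>\<^sup>+k. ennreal (2 powi snd k) \<partial>count_space K)"
    by (intro mult_left_mono nn_integral_count_space_mono_set maximal_strips_subset) simp
  finally show ?thesis .
qed

lemma dLq_nu_power_le_strip_size_dmu:
  assumes q: "0 < q" and r: "0 < r"
  shows "dLq_nu_power q r (\<lambda>x. indicator A x * G x) \<le> epow (strip_size q r G) q * dmu A"
proof (cases "strip_size q r G" rule: ennreal_pos_cases)
  case 1
  then have "(\<lambda>x. indicator A x * G x) = (\<lambda>_. 0)"
    using strip_size_eq_0_imp[OF q r] by auto
  then show ?thesis
    by (simp add: dLq_nu_power_zero[OF r])
next
  case 2
  show ?thesis
  proof (cases "A = {}")
    case True
    then show ?thesis
      by (simp add: dLq_nu_power_zero[OF r])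
  next
    case False
    then show ?thesis
      using 2 dmu_pos[OF False] q by (simp add: epow_top ennreal_top_mult)
  qed
next
  case (3 S)
  then have c: "epow (strip_size q r G) q \<noteq> top" "epow (strip_size q r G) q \<noteq> 0"
    by (simp_all add: epow_ennreal)
  show ?thesis
    unfolding dmu_eq_cover_measure
  proof (rule le_mult_cover_measure[OF c(1) UN_dstrip_of])
    fix K
    assume "A \<subseteq> (\<Union>k\<in>K. dstrip_of k)"
    then show "dLq_nu_power q r (\<lambda>x. indicator A x * G x)
        \<le> epow (strip_size q r G) q * (\<integral>\<^sup>+k. ennreal (2 powi snd k) \<partial>count_space K)"
      using c(2) dLq_nu_power_le_strip_cover_cost[OF q r]
      by (cases "(\<integral>\<^sup>+k. ennreal (2 powi snd k) \<partial>count_space K) = top")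
        (simp_all add: ennreal_mult_eq_top_iff)
  qed
qed

lemma dLinf_mu_eq_strip_size:
  assumes q: "0 < q" and r: "0 < r"
  shows "dLinf_mu q r G = strip_size q r G"
proof (rule antisym)
  show "dLinf_mu q r G \<le> strip_size q r G"
    unfolding dLinf_mu_def sup_size_def dLq_nu_eq_epow
    by (intro SUP_least epow_quotient_leI[OF q] dLq_nu_power_le_strip_size_dmu[OF q r])
  show "strip_size q r G \<le> dLinf_mu q r G"
    unfolding strip_size_def dLinf_mu_def sup_size_def
  proof (rule SUP_least)
    fix k :: "int \<times> int"
    have "dstrip_of k \<noteq> {}"
      using mem_dstrip_self by blast
    then show "epow (ennreal (2 powi snd k)) (- 1 / q) * dLq_nu q r (\<lambda>x. indicator (dstrip_of k) x * G x)
        \<le> (SUP A\<in>{A. A \<noteq> {}}. epow (dmu A) (- 1 / q) * dLq_nu q r (\<lambda>x. indicator A x * G x))"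
      by (intro SUP_upper2[where i="dstrip_of k"]) (simp_all add: dmu_dstrip)
  qed
qed

lemma Linf_mu_eq_dLinf_mu:
  assumes g: "Lr_on_Xsp r g" and r: "0 < r" and q: "0 < q"
  shows "Linf_mu q r g = dLinf_mu q r (Fdisc g r)"
proof -
  have "Lq_nu q r (\<lambda>x. indicator (tile_union S) x * g x) = dLq_nu q r (\<lambda>k. indicator S k * Fdisc g r k)"
    for S
    using Lq_nu_eq_dLq_nu[OF Lr_on_Xsp_indicator_mult[OF g tile_union_sets_lebesgue] r]
    by (simp add: Fdisc_indicator_tile_union[OF r])
  then have "Linf_mu q r g = strip_size q r (Fdisc g r)"
    unfolding Linf_mu_def sup_size_def Strips_def strip_eq_tile_union strip_size_def
    by (simp add: image_image case_prod_beta' mu_tile_union dmu_dstrip)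
  then show ?thesis
    using dLinf_mu_eq_strip_size[OF q r] by simp
qed

lemma Lp_mu_eq_dLp_mu:
  assumes g: "Lr_on_Xsp r g" and r: "0 < r" and q: "0 < q"
  shows "Lp_mu p q r g = dLp_mu p q r (Fdisc g r)"
proof -
  have "level_meas Xsp Bmeas mu (Linf_mu q r) g lam
      = level_meas UNIV UNIV dmu (dLinf_mu q r) (Fdisc g r) lam" for lam
  proof (rule level_meas_eq_discrete)
    show "abs_monotone (Linf_mu q r)"
      by (rule abs_monotone_Linf_mu[OF q r])
    show "mu B = dmu (tile_index ` B)" if "B \<subseteq> Xsp" for B
      using that by (rule mu_eq_dmu)
    fix S
    have "Lr_on_Xsp r (\<lambda>x. indicator (tile_union (- S)) x * g x)"
      by (rule Lr_on_Xsp_indicator_mult[OF g tile_union_sets_lebesgue])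
    then show "Linf_mu q r (\<lambda>x. indicator (tile_union (- S)) x * g x)
        = dLinf_mu q r (\<lambda>k. indicator (- S) k * Fdisc g r k)"
      by (simp add: Linf_mu_eq_dLinf_mu r q Fdisc_indicator_tile_union)
  qed
  then show ?thesis
    unfolding Lp_mu_def dLp_mu_def by (metis ext)
qed

lemma Lr_on_Xsp_if_supported:
  fixes f :: "pt \<Rightarrow> real"
  assumes "f \<in> borel_measurable lebesgue"
    and loc: "\<forall>K. compact K \<and> K \<subseteq> Xsp \<longrightarrow>
      (\<integral>\<^sup>+ x. ennreal (\<bar>f x\<bar> powr r) * indicator K x \<partial>lebesgue) < \<infinity>"
    and supp: "\<forall>x. x \<notin> XJ J \<longrightarrow> f x = 0"
  shows "Lr_on_Xsp r f"
proof -
  define a :: real where "a = 2 ^ J * real J"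
  define K :: "pt set" where "K = {- a .. a} \<times> {(2::real) powi (- int J) .. 2 ^ J} \<times> {- a .. a}"
  have "XJ J \<subseteq> K"
    unfolding XJ_def K_def a_def by auto
  have "K \<subseteq> Xsp"
    unfolding K_def Xsp_def using less_le_trans[OF zero_less_power_int[of "2::real" "- int J"]] by auto
  have "compact K"
    unfolding K_def by (intro compact_Times compact_Icc)
  have "(\<integral>\<^sup>+x. ennreal (\<bar>f x\<bar> powr r) \<partial>lebesgue)
      = (\<integral>\<^sup>+ x. ennreal (\<bar>f x\<bar> powr r) * indicator K x \<partial>lebesgue)"
    using supp \<open>XJ J \<subseteq> K\<close> by (intro nn_integral_cong) (auto simp: indicator_def)
  also have "\<dots> < \<infinity>"
    using loc \<open>compact K\<close> \<open>K \<subseteq> Xsp\<close> by blast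
  moreover have "\<forall>x. x \<notin> Xsp \<longrightarrow> f x = 0"
    using supp \<open>XJ J \<subseteq> K\<close> \<open>K \<subseteq> Xsp\<close> by blast
  ultimately show ?thesis
    unfolding Lr_on_Xsp_def using assms(1) by simp
qed

theorem lemma5p6:
  fixes p q r :: real and f :: "pt \<Rightarrow> real" and J :: nat
  assumes "p > 0" and "q > 0" and "r > 0"
    and "f \<in> borel_measurable lebesgue"
    and "\<forall>K. compact K \<and> K \<subseteq> Xsp \<longrightarrow>
           (\<integral>\<^sup>+ x. ennreal (\<bar>f x\<bar> powr r) * indicator K x \<partial>lebesgue) < \<infinity>"
    and "\<forall>x. x \<notin> XJ J \<longrightarrow> f x = 0"
  shows "Lq_nu q r f = dLq_nu q r (Fdisc f r) \<and> Lp_mu p q r f = dLp_mu p q r (Fdisc f r)"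
proof -
  have f: "Lr_on_Xsp r f"
    using assms(4-6) by (rule Lr_on_Xsp_if_supported)
  show ?thesis
    using Lq_nu_eq_dLq_nu[OF f assms(3)] Lp_mu_eq_dLp_mu[OF f assms(3,2)] by simp
qed

end
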